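(* Let $m>0$ and $C>\frac{2}{(4\pi)^2}$. There exists $D_C\in\mathbb{R}_+$, independent of $\varepsilon\in(0,1]$, such that for every $\varepsilon\in(0,1]$, $x\in\mathbb{R}^2$ and $z\in\varepsilon\mathbb{Z}^2$, $$|\mathcal{G}_\varepsilon(x,z)|\le C\log_+\Big(\frac{1}{\sqrt{|x|^2+|z|^2}\vee\varepsilon}\Big)+D_C,$$ where $\log_+(t)=\max(\log t,0)$ and $a\vee b=\max(a,b)$.
   Context: For $\varepsilon\in(0,1]$, $x\in\mathbb{R}^2$, $z\in\varepsilon\mathbb{Z}^2$, $$\mathcal{G}_\varepsilon(x,z)=\frac{1}{(2\pi)^4}\int_{\mathbb{R}^2\times[-\pi/\varepsilon,\pi/\varepsilon]^2}\frac{e^{-i(x\cdot y+k\cdot z)}}{\big(|y|^2+4\varepsilon^{-2}\sin^2(\varepsilon k_1/2)+4\varepsilon^{-2}\sin^2(\varepsilon k_2/2)+m^2\big)^2}\,\mathrm{d}y\,\mathrm{d}k,$$ the Green function of $(m^2-\Delta_{\mathbb{R}^2}-\Delta_{\varepsilon\mathbb{Z}^2})^2$ on $\mathbb{R}^2\times\varepsilon\mathbb{Z}^2$. *)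

theory Defs
  imports "HOL-Analysis.Analysis"
begin

text \<open>Symbol (denominator) of the operator (m^2 - Delta_R2 - Delta_{eps Z2}) at frequency (y,k).\<close>
definition symb :: "real \<Rightarrow> real \<Rightarrow> real \<times> real \<Rightarrow> real \<times> real \<Rightarrow> real" where
  "symb m \<epsilon> y k =
     (norm y)\<^sup>2 + 4 * \<epsilon> powi (-2) * (sin (\<epsilon> * fst k / 2))\<^sup>2
               + 4 * \<epsilon> powi (-2) * (sin (\<epsilon> * snd k / 2))\<^sup>2 + m\<^sup>2"

definition Green :: "real \<Rightarrow> real \<Rightarrow> real \<times> real \<Rightarrow> real \<times> real \<Rightarrow> complex" where
  "Green m \<epsilon> x z =
     complex_of_real (1 / (2 * pi) ^ 4) *
     (LINT w : (UNIV \<times> ({-pi/\<epsilon>..pi/\<epsilon>} \<times> {-pi/\<epsilon>..pi/\<epsilon>})) | lborel.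
        exp (- \<i> * complex_of_real (x \<bullet> fst w + snd w \<bullet> z))
        / complex_of_real ((symb m \<epsilon> (fst w) (snd w))\<^sup>2))"

definition lattice :: "real \<Rightarrow> (real \<times> real) set" where
  "lattice \<epsilon> = {(\<epsilon> * of_int a, \<epsilon> * of_int b) | a b :: int. True}"

definition log_plus :: "real \<Rightarrow> real" where
  "log_plus t = max (ln t) 0"

end

theory Submission
  imports Defs "HOL-Probability.Probability" "HOL-Real_Asymp.Real_Asymp"
begin

text \<open>
  Writing \<open>1 / s\<^sup>2 = \<integral>\<^sub>0\<^sup>\<infinity> t e\<^sup>-\<^sup>t\<^sup>s dt\<close> and applying Fubini, the integrand factorises for fixed \<open>t\<close>:
  the continuum variables give Gaussians and each lattice variable gives
  \<open>L\<^sub>t(c) = \<integral> e\<^sup>-\<^sup>t\<^sup>a\<^sup>(\<^sup>k\<^sup>) e\<^sup>-\<^sup>i\<^sup>c\<^sup>k dk\<close> over \<open>[-\<pi>/\<epsilon>, \<pi>/\<epsilon>]\<close>, where \<open>a(k) = 4\<epsilon>\<^sup>-\<^sup>2 sin\<^sup>2(\<epsilon>k/2)\<close>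
  (\<open>lattice_kernel \<epsilon> t c\<close> and \<open>lattice_symb \<epsilon> k\<close> below). Hence
  \<open>|G\<^sub>\<epsilon>(x,z)| \<le> (16\<pi>\<^sup>3)\<^sup>-\<^sup>1 \<integral>\<^sub>0\<^sup>\<infinity> e\<^sup>-\<^sup>t\<^sup>m\<^sup>2 e\<^sup>-\<^sup>|\<^sup>x\<^sup>|\<^sup>2\<^sup>/\<^sup>4\<^sup>t |L\<^sub>t(z\<^sub>1)| |L\<^sub>t(z\<^sub>2)| dt\<close>.

  Since \<open>a(k) \<ge> \<gamma> min(k\<^sup>2, \<theta>\<^sup>2/\<epsilon>\<^sup>2)\<close> with \<open>\<gamma> = (1 - \<theta>\<^sup>2/24)\<^sup>2\<close>, the lattice integral is at most
  \<open>(\<pi>/\<gamma>t)\<^sup>1\<^sup>/\<^sup>2 + 2\<pi>/\<epsilon> e\<^sup>-\<^sup>\<gamma>\<^sup>\<theta>\<^sup>2\<^sup>t\<^sup>/\<^sup>\<epsilon>\<^sup>2\<close>. Squaring with weights \<open>1 + \<delta>\<close> and \<open>1 + 1/\<delta>\<close>, the times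
  \<open>r\<^sup>2 \<le> t \<le> 1\<close>, where \<open>r = max |(x,z)| \<epsilon>\<close>, contribute \<open>(1 + \<delta>)\<pi>/\<gamma> \<cdot> log (1/r\<^sup>2)\<close>, and everything
  else is bounded uniformly in \<open>\<epsilon>\<close>. For \<open>t < r\<^sup>2\<close> either \<open>|x| \<ge> r/\<surd>2\<close> and the Gaussian factor is
  small, or a lattice coordinate \<open>\<epsilon>n\<close> of \<open>z\<close> is at least \<open>r/2\<close>; then an integration by parts in \<open>k\<close>,
  whose boundary terms cancel because \<open>z \<in> \<epsilon>\<int>\<^sup>2\<close>, gives \<open>|L\<^sub>t(\<epsilon>n)| = O(1/|\<epsilon>n|)\<close>. In both cases
  the integrand is \<open>O(r\<^sup>-\<^sup>1 t\<^sup>-\<^sup>1\<^sup>/\<^sup>2)\<close>, whose integral over \<open>[0, r\<^sup>2]\<close> is bounded. Letting \<open>\<theta>, \<delta> \<rightarrow> 0\<close>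
  the coefficient \<open>(1 + \<delta>)/(8\<pi>\<^sup>2\<gamma>)\<close> of \<open>log (1/r)\<close> tends to \<open>2/(4\<pi>)\<^sup>2\<close>.
\<close>

section \<open>Explicit integrals on the real line\<close>

lemma has_bochner_integral_std_normal_char:
  "has_bochner_integral lborel (\<lambda>u. std_normal_density u *\<^sub>R iexp (s * u)) (complex_of_real (exp (- s\<^sup>2 / 2)))"
proof -
  interpret real_distribution std_normal_distribution by (rule real_dist_normal_dist)
  have "integrable std_normal_distribution (\<lambda>u. iexp (s * u))"
    by (rule integrable_iexp) auto
  then have "integrable lborel (\<lambda>u. std_normal_density u *\<^sub>R iexp (s * u))"
    by (subst (asm) integrable_density) auto
  moreover have "char std_normal_distribution s = integral\<^sup>L lborel (\<lambda>u. std_normal_density u *\<^sub>R iexp (s * u))"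
    unfolding char_def by (subst integral_density) auto
  ultimately show ?thesis
    by (simp add: has_bochner_integral_iff char_std_normal_distribution)
qed

lemma has_bochner_integral_gaussian_fourier:
  fixes t \<xi> :: real
  assumes t: "t > 0"
  shows "has_bochner_integral lborel (\<lambda>y. exp (- t * y\<^sup>2) *\<^sub>R exp (- \<i> * complex_of_real (\<xi> * y)))
           (complex_of_real (sqrt (pi / t) * exp (- \<xi>\<^sup>2 / (4 * t))))"
proof -
  define c where "c = sqrt (2 * t)"
  define s where "s = - \<xi> / c"
  have c: "c > 0" using t by (simp add: c_def)
  have "has_bochner_integral lborel (\<lambda>y. std_normal_density (0 + c * y) *\<^sub>R iexp (s * (0 + c * y)))
      (complex_of_real (exp (- s\<^sup>2 / 2)) /\<^sub>R \<bar>c\<bar>)"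
    using has_bochner_integral_std_normal_char[of s] c
    by (subst (asm) lborel_has_bochner_integral_real_affine_iff[where c=c and t=0]) auto
  from has_bochner_integral_scaleR_right[OF this, of "sqrt (2 * pi)"]
  have "has_bochner_integral lborel (\<lambda>y. sqrt (2 * pi) *\<^sub>R (std_normal_density (c * y) *\<^sub>R iexp (s * (c * y))))
      (sqrt (2 * pi) *\<^sub>R (complex_of_real (exp (- s\<^sup>2 / 2)) /\<^sub>R \<bar>c\<bar>))"
    by simp
  moreover have "sqrt (2 * pi) *\<^sub>R (std_normal_density (c * y) *\<^sub>R iexp (s * (c * y)))
      = exp (- t * y\<^sup>2) *\<^sub>R exp (- \<i> * complex_of_real (\<xi> * y))" for y
  proof -
    have "(c * y)\<^sup>2 / 2 = t * y\<^sup>2" using t by (simp add: c_def power_mult_distrib)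
    moreover have "s * (c * y) = - (\<xi> * y)" using c by (simp add: s_def)
    ultimately show ?thesis
      by (simp add: std_normal_density_def scaleR_conv_of_real)
  qed
  moreover have "sqrt (2 * pi) *\<^sub>R (complex_of_real (exp (- s\<^sup>2 / 2)) /\<^sub>R \<bar>c\<bar>)
      = complex_of_real (sqrt (pi / t) * exp (- \<xi>\<^sup>2 / (4 * t)))"
  proof -
    have "sqrt (2 * pi) * inverse \<bar>c\<bar> * exp (- s\<^sup>2 / 2) = sqrt (pi / t) * exp (- \<xi>\<^sup>2 / (4 * t))"
      using t c by (simp add: s_def c_def power_divide real_sqrt_divide[symmetric] real_sqrt_mult[symmetric]
          flip: divide_inverse)
    then show ?thesis
      by (simp only: scaleR_scaleR scaleR_conv_of_real mult.assoc of_real_mult[symmetric])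
  qed
  ultimately show ?thesis by simp
qed

lemma has_bochner_integral_gaussian:
  "t > 0 \<Longrightarrow> has_bochner_integral lborel (\<lambda>y. exp (- t * y\<^sup>2)) (sqrt (pi / t))"
  using has_bochner_integral_Re[OF has_bochner_integral_gaussian_fourier[of t 0]] by simp

lemma has_bochner_integral_exp_atLeast:
  fixes c a :: real
  assumes c: "c > 0"
  shows "has_bochner_integral lborel (\<lambda>t. exp (- c * t) * indicator {a..} t) (exp (- c * a) / c)"
proof -
  define F where "F t = - exp (- c * t) / c" for t
  have "DERIV F t :> exp (- c * t)" for t
    unfolding F_def using c by (auto intro!: derivative_eq_intros simp: field_simps)
  moreover have "(F \<longlongrightarrow> 0) at_top"
    unfolding F_def using c by real_asymp
  ultimately have "(\<integral>\<^sup>+t. ennreal (exp (- c * t)) * indicator {a..} t \<partial>lborel) = 0 - F a"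
    by (intro nn_integral_FTC_atLeast) auto
  then have "(\<integral>\<^sup>+t. ennreal (exp (- c * t) * indicator {a..} t) \<partial>lborel) = ennreal (exp (- c * a) / c)"
    by (simp add: F_def indicator_mult_ennreal mult.commute)
  then show ?thesis
    by (intro has_bochner_integral_nn_integral) (use c in \<open>auto split: split_indicator\<close>)
qed

lemma has_bochner_integral_mult_exp_atLeast0:
  fixes s :: real
  assumes s: "s > 0"
  shows "has_bochner_integral lborel (\<lambda>t. t * exp (- s * t) * indicator {0..} t) (1 / s\<^sup>2)"
proof -
  define F where "F t = - (t / s + 1 / s\<^sup>2) * exp (- s * t)" for t
  have "DERIV F t :> t * exp (- s * t)" for t
    unfolding F_def using s by (auto intro!: derivative_eq_intros simp: field_simps power2_eq_square)
  moreover have "(F \<longlongrightarrow> 0) at_top"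
    unfolding F_def using s by real_asymp
  ultimately have "(\<integral>\<^sup>+t. ennreal (t * exp (- s * t)) * indicator {0..} t \<partial>lborel) = 0 - F 0"
    by (intro nn_integral_FTC_atLeast) auto
  then have "(\<integral>\<^sup>+t. ennreal (t * exp (- s * t) * indicator {0..} t) \<partial>lborel) = ennreal (1 / s\<^sup>2)"
    by (simp add: F_def indicator_mult_ennreal mult.commute)
  then show ?thesis
    by (intro has_bochner_integral_nn_integral) (auto split: split_indicator)
qed

lemma has_bochner_integral_inverse_Icc:
  fixes a b :: real
  assumes "0 < a" "a \<le> b"
  shows "has_bochner_integral lborel (\<lambda>t. indicator {a..b} t / t) (ln b - ln a)"
proof -
  have "has_bochner_integral lborel (\<lambda>t. 1 / t * indicator {a..b} t) (ln b - ln a)"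
    by (rule has_bochner_integral_FTC_Icc_nonneg[where F=ln])
      (use assms in \<open>auto intro!: derivative_eq_intros\<close>)
  then show ?thesis by simp
qed

lemma has_bochner_integral_inverse_sqrt_Icc:
  fixes c :: real
  assumes c: "0 < c"
  shows "has_bochner_integral lborel (\<lambda>t. indicator {0..c} t / sqrt t) (2 * sqrt c)"
proof -
  have "((\<lambda>t. t powr (-1/2)) has_integral (c powr (-1/2 + 1) / (-1/2 + 1))) {0..c}"
    by (rule has_integral_powr_from_0) (use c in auto)
  from nn_integral_has_integral_lebesgue'[OF _ this]
  have "(\<integral>\<^sup>+t. ennreal (t powr (-1/2)) * indicator {0..c} t \<partial>lborel) = ennreal (2 * sqrt c)"
    using c by (simp add: powr_half_sqrt mult.commute)
  moreover have "ennreal (t powr (-1/2)) * indicator {0..c} t = ennreal (indicator {0..c} t / sqrt t)" for t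
    by (cases "t = 0")
      (auto split: split_indicator simp: powr_minus_divide powr_half_sqrt)
  ultimately have "(\<integral>\<^sup>+t. ennreal (indicator {0..c} t / sqrt t) \<partial>lborel) = ennreal (2 * sqrt c)"
    by simp
  then show ?thesis
    by (intro has_bochner_integral_nn_integral) (use c in \<open>auto split: split_indicator\<close>)
qed

lemma has_bochner_integral_indicator_Icc_mult:
  fixes a b K :: real
  assumes "a \<le> b"
  shows "has_bochner_integral lborel (\<lambda>k. indicator {a..b} k * K) ((b - a) * K)"
proof -
  have "has_bochner_integral lborel (\<lambda>k. indicator {a..b} k * K) (measure lborel {a..b} * K)"
    using assms by (intro has_bochner_integral_mult_left has_bochner_integral_real_indicator) auto
  then show ?thesis using assms by simp
qed

lemma integral_indicator_inverse_le_log_plus: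
  fixes r :: real
  assumes "r > 0"
  shows "integrable lborel (\<lambda>t. indicator {r\<^sup>2..1} t / t)"
    and "integral\<^sup>L lborel (\<lambda>t. indicator {r\<^sup>2..1} t / t) \<le> 2 * log_plus (1 / r)"
proof -
  have "integrable lborel (\<lambda>t. indicator {r\<^sup>2..1} t / t) \<and>
      integral\<^sup>L lborel (\<lambda>t. indicator {r\<^sup>2..1} t / t) \<le> 2 * log_plus (1 / r)"
  proof (cases "r\<^sup>2 \<le> 1")
    case True
    have "has_bochner_integral lborel (\<lambda>t. indicator {r\<^sup>2..1} t / t) (ln 1 - ln (r\<^sup>2))"
      using assms True by (intro has_bochner_integral_inverse_Icc) auto
    moreover have "ln 1 - ln (r\<^sup>2) = 2 * ln (1 / r)"
      using assms by (simp add: ln_realpow ln_div)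
    ultimately show ?thesis
      by (auto simp: has_bochner_integral_iff log_plus_def)
  next
    case False
    then have "(\<lambda>t. indicator {r\<^sup>2..1} t / t) = (\<lambda>t. 0 :: real)"
      by (auto simp: fun_eq_iff)
    then show ?thesis by (simp add: log_plus_def)
  qed
  then show "integrable lborel (\<lambda>t. indicator {r\<^sup>2..1} t / t)"
    and "integral\<^sup>L lborel (\<lambda>t. indicator {r\<^sup>2..1} t / t) \<le> 2 * log_plus (1 / r)"
    by auto
qed

lemma lborel_pair_mult:
  fixes f :: "'a::euclidean_space \<Rightarrow> 'c::{real_normed_field, banach, second_countable_topology}"
    and g :: "'b::euclidean_space \<Rightarrow> 'c"
  assumes f: "integrable lborel f" and g: "integrable lborel g"
  shows "integrable lborel (\<lambda>p. f (fst p) * g (snd p))"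
    and "integral\<^sup>L lborel (\<lambda>p. f (fst p) * g (snd p)) = integral\<^sup>L lborel f * integral\<^sup>L lborel g"
proof -
  have [measurable]: "f \<in> borel_measurable lborel" "g \<in> borel_measurable lborel"
    using f g by auto
  have I: "integrable (lborel \<Otimes>\<^sub>M lborel) (\<lambda>p. f (fst p) * g (snd p))"
  proof (rule lborel_pair.Fubini_integrable)
    have "integrable lborel (\<lambda>x. norm (f x) * (\<integral>y. norm (g y) \<partial>lborel))"
      using f by (intro integrable_mult_left) auto
    then show "integrable lborel (\<lambda>x. \<integral>y. norm (f (fst (x, y)) * g (snd (x, y))) \<partial>lborel)"
      by (simp add: norm_mult)
    show "AE x in lborel. integrable lborel (\<lambda>y. f (fst (x, y)) * g (snd (x, y)))"
      using g by (auto intro!: integrable_mult_right)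
  qed measurable
  then show "integrable lborel (\<lambda>p. f (fst p) * g (snd p))" by (simp add: lborel_prod)
  have "integral\<^sup>L (lborel \<Otimes>\<^sub>M lborel) (\<lambda>p. f (fst p) * g (snd p)) = (\<integral>x. (\<integral>y. f x * g y \<partial>lborel) \<partial>lborel)"
    using lborel_pair.integral_fst'[OF I] by simp
  then show "integral\<^sup>L lborel (\<lambda>p. f (fst p) * g (snd p)) = integral\<^sup>L lborel f * integral\<^sup>L lborel g"
    by (simp add: lborel_prod)
qed

lemma cos_ge_one_minus_square_half: "1 - x\<^sup>2 / 2 \<le> cos (x::real)"
proof -
  have "(sin (x / 2))\<^sup>2 \<le> (x / 2)\<^sup>2"
    using abs_sin_x_le_abs_x[of "x/2"] by (metis abs_le_square_iff)
  then show ?thesis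
    using cos_double_sin[of "x/2"] by (simp add: power_divide)
qed

lemma sin_ge_cubic:
  fixes v :: real
  assumes "0 \<le> v"
  shows "v - v ^ 3 / 6 \<le> sin v"
proof -
  define f where "f y = sin y - y + y ^ 3 / 6" for y :: real
  have "DERIV f y :> cos y - 1 + y\<^sup>2 / 2" for y
    unfolding f_def by (auto intro!: derivative_eq_intros simp: power2_eq_square)
  then have "f 0 \<le> f v"
    using assms cos_ge_one_minus_square_half
    by (intro DERIV_nonneg_imp_nondecreasing[OF assms]) (fastforce simp: algebra_simps)
  then show ?thesis by (simp add: f_def)
qed

lemma sin_ge_min:
  fixes v \<theta> :: real
  assumes "0 \<le> \<theta>" "0 \<le> v" "v \<le> pi / 2"
  shows "(1 - \<theta>\<^sup>2 / 24) * min v (\<theta> / 2) \<le> sin v"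
proof (cases "v \<le> \<theta> / 2")
  case True
  have "v\<^sup>2 \<le> (\<theta> / 2)\<^sup>2" using True assms by (intro power_mono) auto
  then have "v * v\<^sup>2 \<le> v * (\<theta> / 2)\<^sup>2" using assms by (intro mult_left_mono) auto
  then have "(1 - \<theta>\<^sup>2 / 24) * v \<le> v - v ^ 3 / 6"
    by (simp add: power2_eq_square power3_eq_cube field_simps)
  then show ?thesis using True sin_ge_cubic[of v] assms by simp
next
  case False
  have "(1 - \<theta>\<^sup>2 / 24) * (\<theta> / 2) = \<theta> / 2 - (\<theta> / 2) ^ 3 / 6"
    by (simp add: field_simps power3_eq_cube power2_eq_square)
  also have "\<dots> \<le> sin (\<theta> / 2)" using assms by (intro sin_ge_cubic) simp
  also have "\<dots> \<le> sin v" using False assms by (intro sin_monotone_2pi_le) auto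
  finally show ?thesis using False by simp
qed

lemma sqrt_mult_exp_neg_le:
  fixes s :: real
  assumes "0 \<le> s"
  shows "sqrt s * exp (- s) \<le> exp (- s / 2)"
proof -
  have "s \<le> exp s"
    using exp_ge_add_one_self[of s] by linarith
  then have "sqrt s \<le> sqrt (exp s)" by simp
  also have "sqrt (exp s) = exp (s / 2)"
    by (rule real_sqrt_unique) (simp_all add: power2_eq_square flip: exp_add)
  finally have "sqrt s * exp (- s) \<le> exp (s / 2) * exp (- s)"
    by (intro mult_right_mono) auto
  then show ?thesis by (simp flip: exp_add)
qed

lemma exp_neg_le_inverse_sqrt:
  fixes s :: real
  assumes "s > 0"
  shows "exp (- s) \<le> 1 / sqrt s"
proof -
  have "sqrt s * exp (- s) \<le> exp (- s / 2)"
    using assms by (intro sqrt_mult_exp_neg_le) simp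
  also have "\<dots> \<le> 1"
    using assms by simp
  finally show ?thesis
    using assms by (simp add: field_simps)
qed

lemma exp_neg_mult_le_add:
  fixes t s a b :: real
  assumes "t \<ge> 0" "min a b \<le> s"
  shows "exp (- t * s) \<le> exp (- t * a) + exp (- t * b)"
proof (cases "a \<le> b")
  case True
  then have "t * a \<le> t * s" using assms by (intro mult_left_mono) auto
  then have "exp (- t * s) \<le> exp (- t * a)" by simp
  then show ?thesis using exp_gt_zero[of "- t * b"] by linarith
next
  case False
  then have "t * b \<le> t * s" using assms by (intro mult_left_mono) auto
  then have "exp (- t * s) \<le> exp (- t * b)" by simp
  then show ?thesis using exp_gt_zero[of "- t * a"] by linarith
qed

lemma square_add_le_weighted:
  fixes a b \<delta> :: real
  assumes "\<delta> > 0"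
  shows "(a + b)\<^sup>2 \<le> (1 + \<delta>) * a\<^sup>2 + (1 + 1 / \<delta>) * b\<^sup>2"
proof -
  have "0 \<le> (\<delta> * a - b)\<^sup>2" by simp
  then have "2 * a * b \<le> \<delta> * a\<^sup>2 + b\<^sup>2 / \<delta>"
    using assms by (simp add: power2_eq_square field_simps)
  then show ?thesis by (simp add: power2_eq_square algebra_simps)
qed

section \<open>The symbol of the lattice Laplacian\<close>

definition lattice_symb :: "real \<Rightarrow> real \<Rightarrow> real" where
  "lattice_symb \<epsilon> k = 4 * \<epsilon> powi (-2) * (sin (\<epsilon> * k / 2))\<^sup>2"

lemma lattice_symb_eq: "lattice_symb \<epsilon> k = 4 * (sin (\<epsilon> * k / 2))\<^sup>2 / \<epsilon>\<^sup>2"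
  by (simp add: lattice_symb_def power_int_minus field_simps)

lemma lattice_symb_nonneg: "0 \<le> lattice_symb \<epsilon> k"
  by (simp add: lattice_symb_eq)

lemma continuous_on_lattice_symb: "continuous_on S (lattice_symb \<epsilon>)"
  unfolding lattice_symb_def by (intro continuous_intros) auto

lemma continuous_on_exp_lattice_symb: "continuous_on S (\<lambda>k. exp (- t * lattice_symb \<epsilon> k))"
  by (intro continuous_intros continuous_on_lattice_symb[THEN continuous_on_compose2]) auto

lemma has_real_derivative_lattice_symb:
  assumes "\<epsilon> \<noteq> 0"
  shows "(lattice_symb \<epsilon> has_real_derivative 2 * sin (\<epsilon> * k) / \<epsilon>) (at k)"
proof -
  have "((\<lambda>k. 4 * (sin (\<epsilon> * k / 2))\<^sup>2 / \<epsilon>\<^sup>2) has_real_derivative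
          4 * sin (\<epsilon> * k / 2) * cos (\<epsilon> * k / 2) / \<epsilon>) (at k)"
    using assms by (auto intro!: derivative_eq_intros simp: power2_eq_square field_simps)
  moreover have "4 * sin (\<epsilon> * k / 2) * cos (\<epsilon> * k / 2) / \<epsilon> = 2 * sin (\<epsilon> * k) / \<epsilon>"
    using sin_double[of "\<epsilon> * k / 2"] by simp
  ultimately show ?thesis by (simp add: lattice_symb_eq[abs_def])
qed

lemma abs_deriv_lattice_symb_le: "\<bar>2 * sin (\<epsilon> * k) / \<epsilon>\<bar> \<le> 2 * sqrt (lattice_symb \<epsilon> k)"
proof -
  have "(2 * sin (\<epsilon> * k) / \<epsilon>)\<^sup>2 = 4 * (sin (\<epsilon> * k / 2))\<^sup>2 * (4 * (cos (\<epsilon> * k / 2))\<^sup>2) / \<epsilon>\<^sup>2"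
    using sin_double[of "\<epsilon> * k / 2"] by (simp add: power_mult_distrib power_divide)
  also have "\<dots> \<le> 4 * (sin (\<epsilon> * k / 2))\<^sup>2 * 4 / \<epsilon>\<^sup>2"
    by (intro divide_right_mono mult_left_mono) (auto simp: abs_square_le_1)
  also have "\<dots> = (2 * sqrt (lattice_symb \<epsilon> k))\<^sup>2"
    by (simp add: lattice_symb_eq power_mult_distrib)
  finally have "\<bar>2 * sin (\<epsilon> * k) / \<epsilon>\<bar> \<le> \<bar>2 * sqrt (lattice_symb \<epsilon> k)\<bar>"
    by (simp only: abs_le_square_iff)
  then show ?thesis using lattice_symb_nonneg[of \<epsilon> k] by simp
qed

lemma lattice_symb_lower_bound:
  fixes \<epsilon> \<theta> k :: real
  assumes "\<epsilon> > 0" "0 < \<theta>" "\<theta> \<le> 1" "\<bar>k\<bar> \<le> pi / \<epsilon>"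
  shows "(1 - \<theta>\<^sup>2 / 24)\<^sup>2 * min (k\<^sup>2) (\<theta>\<^sup>2 / \<epsilon>\<^sup>2) \<le> lattice_symb \<epsilon> k"
proof -
  define v where "v = \<bar>\<epsilon> * k / 2\<bar>"
  have v: "0 \<le> v" "v \<le> pi / 2"
    using assms by (auto simp: v_def abs_mult field_simps)
  have "0 \<le> 1 - \<theta>\<^sup>2 / 24" using assms power_le_one[of \<theta> 2] by simp
  then have "((1 - \<theta>\<^sup>2 / 24) * min v (\<theta> / 2))\<^sup>2 \<le> (sin v)\<^sup>2"
    using sin_ge_min[OF less_imp_le[OF assms(2)] v] v assms by (intro power_mono) auto
  then have "4 * ((1 - \<theta>\<^sup>2 / 24) * min v (\<theta> / 2))\<^sup>2 / \<epsilon>\<^sup>2 \<le> 4 * (sin v)\<^sup>2 / \<epsilon>\<^sup>2"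
    by (intro divide_right_mono) auto
  moreover have "4 * (min v (\<theta> / 2))\<^sup>2 / \<epsilon>\<^sup>2 = min (k\<^sup>2) (\<theta>\<^sup>2 / \<epsilon>\<^sup>2)"
  proof -
    have "v \<le> \<theta> / 2 \<longleftrightarrow> 4 * v\<^sup>2 / \<epsilon>\<^sup>2 \<le> 4 * (\<theta> / 2)\<^sup>2 / \<epsilon>\<^sup>2"
      using v assms abs_le_square_iff[of v "\<theta> / 2"] by (simp add: divide_le_cancel)
    then have "4 * (min v (\<theta> / 2))\<^sup>2 / \<epsilon>\<^sup>2 = min (4 * v\<^sup>2 / \<epsilon>\<^sup>2) (4 * (\<theta> / 2)\<^sup>2 / \<epsilon>\<^sup>2)"
      by (auto simp: min_def)
    moreover have "4 * v\<^sup>2 / \<epsilon>\<^sup>2 = k\<^sup>2"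
      using assms by (simp add: v_def power_mult_distrib power_divide)
    ultimately show ?thesis by (simp add: power_divide)
  qed
  moreover have "(sin v)\<^sup>2 = (sin (\<epsilon> * k / 2))\<^sup>2"
    by (simp add: v_def abs_if)
  moreover have "4 * ((1 - \<theta>\<^sup>2 / 24) * min v (\<theta> / 2))\<^sup>2 / \<epsilon>\<^sup>2
      = (1 - \<theta>\<^sup>2 / 24)\<^sup>2 * (4 * (min v (\<theta> / 2))\<^sup>2 / \<epsilon>\<^sup>2)"
    by (simp add: power_mult_distrib)
  ultimately show ?thesis
    by (simp add: lattice_symb_eq)
qed

section \<open>The one-dimensional lattice integral\<close>

definition lattice_wave :: "real \<Rightarrow> real \<Rightarrow> real \<Rightarrow> real \<Rightarrow> complex" where
  "lattice_wave \<epsilon> t c k = indicator {-pi/\<epsilon>..pi/\<epsilon>} k *\<^sub>R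
     (exp (- t * lattice_symb \<epsilon> k) *\<^sub>R exp (- \<i> * complex_of_real (c * k)))"

definition lattice_kernel :: "real \<Rightarrow> real \<Rightarrow> real \<Rightarrow> complex" where
  "lattice_kernel \<epsilon> t c = integral\<^sup>L lborel (lattice_wave \<epsilon> t c)"

definition lattice_mass :: "real \<Rightarrow> real \<Rightarrow> real" where
  "lattice_mass \<epsilon> t = integral\<^sup>L lborel (\<lambda>k. indicator {-pi/\<epsilon>..pi/\<epsilon>} k * exp (- t * lattice_symb \<epsilon> k))"

lemma norm_lattice_wave:
  "norm (lattice_wave \<epsilon> t c k) = indicator {-pi/\<epsilon>..pi/\<epsilon>} k * exp (- t * lattice_symb \<epsilon> k)"
  by (simp add: lattice_wave_def split: split_indicator)

lemma integrable_lattice_wave: "integrable lborel (lattice_wave \<epsilon> t c)"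
  unfolding lattice_wave_def
  by (rule borel_integrable_compact)
    (auto intro!: continuous_intros continuous_on_lattice_symb[THEN continuous_on_compose2])

lemma integrable_lattice_mass:
  "integrable lborel (\<lambda>k. indicator {-pi/\<epsilon>..pi/\<epsilon>} k * exp (- t * lattice_symb \<epsilon> k))"
  using borel_integrable_compact[OF _ continuous_on_exp_lattice_symb, of "{-pi/\<epsilon>..pi/\<epsilon>}" t \<epsilon>]
  by simp

lemma lattice_kernel_eq_integral:
  "lattice_kernel \<epsilon> t c =
     integral {-pi/\<epsilon>..pi/\<epsilon>} (\<lambda>k. exp (- t * lattice_symb \<epsilon> k) *\<^sub>R exp (- \<i> * complex_of_real (c * k)))"
proof -
  have "set_integrable lborel {-pi/\<epsilon>..pi/\<epsilon>}
      (\<lambda>k. exp (- t * lattice_symb \<epsilon> k) *\<^sub>R exp (- \<i> * complex_of_real (c * k)))"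
    using integrable_lattice_wave[of \<epsilon> t c] unfolding set_integrable_def lattice_wave_def[abs_def] .
  from set_borel_integral_eq_integral(2)[OF this] show ?thesis
    by (simp add: lattice_kernel_def lattice_wave_def[abs_def] set_lebesgue_integral_def)
qed

lemma lattice_mass_eq_integral:
  "lattice_mass \<epsilon> t = integral {-pi/\<epsilon>..pi/\<epsilon>} (\<lambda>k. exp (- t * lattice_symb \<epsilon> k))"
proof -
  have "set_integrable lborel {-pi/\<epsilon>..pi/\<epsilon>} (\<lambda>k. exp (- t * lattice_symb \<epsilon> k))"
    using integrable_lattice_mass[of \<epsilon> t] by (simp add: set_integrable_def)
  from set_borel_integral_eq_integral(2)[OF this] show ?thesis
    by (simp add: lattice_mass_def set_lebesgue_integral_def)
qed

lemma norm_lattice_kernel_le: "norm (lattice_kernel \<epsilon> t c) \<le> lattice_mass \<epsilon> t"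
  using integral_norm_bound[of lborel "lattice_wave \<epsilon> t c"]
  by (simp add: lattice_kernel_def lattice_mass_def norm_lattice_wave)

lemma lattice_mass_nonneg: "0 \<le> lattice_mass \<epsilon> t"
  unfolding lattice_mass_def by (intro integral_nonneg_AE) (auto split: split_indicator)

lemma lattice_mass_le:
  assumes "\<epsilon> > 0" "t \<ge> 0"
  shows "lattice_mass \<epsilon> t \<le> 2 * pi / \<epsilon>"
proof -
  have box: "has_bochner_integral lborel (\<lambda>k. indicator {-pi/\<epsilon>..pi/\<epsilon>} k * 1) ((pi / \<epsilon> - - pi / \<epsilon>) * 1)"
    using assms by (intro has_bochner_integral_indicator_Icc_mult) simp
  have "exp (- t * lattice_symb \<epsilon> k) \<le> 1" for k
    using assms lattice_symb_nonneg[of \<epsilon> k] by simp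
  then have "lattice_mass \<epsilon> t \<le> integral\<^sup>L lborel (\<lambda>k. indicator {-pi/\<epsilon>..pi/\<epsilon>} k * 1)"
    unfolding lattice_mass_def using box integrable_lattice_mass
    by (intro integral_mono) (auto simp: has_bochner_integral_iff split: split_indicator)
  with box show ?thesis by (simp add: has_bochner_integral_iff)
qed

lemma lattice_mass_le_gaussian:
  fixes \<epsilon> t \<theta> :: real
  assumes e: "\<epsilon> > 0" and t: "t > 0" and \<theta>: "0 < \<theta>" "\<theta> \<le> 1"
  defines "\<gamma> \<equiv> (1 - \<theta>\<^sup>2 / 24)\<^sup>2"
  shows "lattice_mass \<epsilon> t \<le> sqrt (pi / (\<gamma> * t)) + 2 * pi / \<epsilon> * exp (- t * (\<gamma> * \<theta>\<^sup>2) / \<epsilon>\<^sup>2)"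
proof -
  have "\<theta>\<^sup>2 \<le> 1" using \<theta> by (simp add: power_le_one)
  then have \<gamma>: "\<gamma> > 0" unfolding \<gamma>_def by auto
  have "has_bochner_integral lborel (\<lambda>k. exp (- (\<gamma> * t) * k\<^sup>2)) (sqrt (pi / (\<gamma> * t)))"
    by (rule has_bochner_integral_gaussian) (use \<gamma> t in simp)
  moreover have "has_bochner_integral lborel (\<lambda>k. indicator {-pi/\<epsilon>..pi/\<epsilon>} k * exp (- t * (\<gamma> * \<theta>\<^sup>2) / \<epsilon>\<^sup>2))
      ((pi / \<epsilon> - - pi / \<epsilon>) * exp (- t * (\<gamma> * \<theta>\<^sup>2) / \<epsilon>\<^sup>2))"
    using e by (intro has_bochner_integral_indicator_Icc_mult) simp
  ultimately have sum: "has_bochner_integral lborel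
      (\<lambda>k. exp (- (\<gamma> * t) * k\<^sup>2) + indicator {-pi/\<epsilon>..pi/\<epsilon>} k * exp (- t * (\<gamma> * \<theta>\<^sup>2) / \<epsilon>\<^sup>2))
      (sqrt (pi / (\<gamma> * t)) + 2 * pi / \<epsilon> * exp (- t * (\<gamma> * \<theta>\<^sup>2) / \<epsilon>\<^sup>2))"
    by (auto dest: has_bochner_integral_add)
  have "indicator {-pi/\<epsilon>..pi/\<epsilon>} k * exp (- t * lattice_symb \<epsilon> k)
      \<le> exp (- (\<gamma> * t) * k\<^sup>2) + indicator {-pi/\<epsilon>..pi/\<epsilon>} k * exp (- t * (\<gamma> * \<theta>\<^sup>2) / \<epsilon>\<^sup>2)" for k
  proof (cases "k \<in> {-pi/\<epsilon>..pi/\<epsilon>}")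
    case True
    then have "\<gamma> * min (k\<^sup>2) (\<theta>\<^sup>2 / \<epsilon>\<^sup>2) \<le> lattice_symb \<epsilon> k"
      unfolding \<gamma>_def using e \<theta> by (intro lattice_symb_lower_bound) auto
    then have "min (\<gamma> * k\<^sup>2) (\<gamma> * \<theta>\<^sup>2 / \<epsilon>\<^sup>2) \<le> lattice_symb \<epsilon> k"
      using \<gamma> by (simp add: min_mult_distrib_left)
    then have "exp (- t * lattice_symb \<epsilon> k) \<le> exp (- t * (\<gamma> * k\<^sup>2)) + exp (- t * (\<gamma> * \<theta>\<^sup>2 / \<epsilon>\<^sup>2))"
      using t by (intro exp_neg_mult_le_add) auto
    then show ?thesis using True by (simp add: ac_simps)
  qed simp
  then have "lattice_mass \<epsilon> t \<le> integral\<^sup>L lborel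
      (\<lambda>k. exp (- (\<gamma> * t) * k\<^sup>2) + indicator {-pi/\<epsilon>..pi/\<epsilon>} k * exp (- t * (\<gamma> * \<theta>\<^sup>2) / \<epsilon>\<^sup>2))"
    unfolding lattice_mass_def using sum integrable_lattice_mass
    by (intro integral_mono) (auto simp: has_bochner_integral_iff)
  with sum show ?thesis by (simp add: has_bochner_integral_iff)
qed

lemma has_vector_derivative_exp_minus_i_mult:
  "((\<lambda>k. exp (- \<i> * complex_of_real (c * k))) has_vector_derivative
      (- \<i> * complex_of_real c * exp (- \<i> * complex_of_real (c * k)))) (at k within S)"
proof -
  have "((\<lambda>z. exp (- \<i> * (complex_of_real c * z))) has_field_derivative
      (exp (- \<i> * (complex_of_real c * complex_of_real k)) * (- \<i> * complex_of_real c))) (at (complex_of_real k))"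
    by (auto intro!: derivative_eq_intros)
  from has_vector_derivative_real_field[OF this] show ?thesis
    by (simp add: mult.commute mult.left_commute)
qed

lemma has_vector_derivative_mult_exp_minus_i_div:
  fixes h :: "real \<Rightarrow> real"
  assumes h: "(h has_real_derivative h') (at k within S)" and c: "c \<noteq> 0"
  shows "((\<lambda>k. complex_of_real (h k) * exp (- \<i> * complex_of_real (c * k)) / (- \<i> * complex_of_real c))
    has_vector_derivative complex_of_real (h k) * exp (- \<i> * complex_of_real (c * k))
      + complex_of_real h' * exp (- \<i> * complex_of_real (c * k)) / (- \<i> * complex_of_real c)) (at k within S)"
proof -
  have "((\<lambda>k. complex_of_real (h k) * exp (- \<i> * complex_of_real (c * k))) has_vector_derivative
      complex_of_real (h k) * (- \<i> * complex_of_real c * exp (- \<i> * complex_of_real (c * k)))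
        + complex_of_real h' * exp (- \<i> * complex_of_real (c * k))) (at k within S)"
    using h by (intro has_vector_derivative_mult has_vector_derivative_exp_minus_i_mult
        has_vector_derivative_of_real)
  from has_vector_derivative_divide[OF this, of "- \<i> * complex_of_real c"]
  have "((\<lambda>k. complex_of_real (h k) * exp (- \<i> * complex_of_real (c * k)) / (- \<i> * complex_of_real c))
    has_vector_derivative (complex_of_real (h k) * (- \<i> * complex_of_real c * exp (- \<i> * complex_of_real (c * k)))
      + complex_of_real h' * exp (- \<i> * complex_of_real (c * k))) / (- \<i> * complex_of_real c)) (at k within S)" .
  moreover have "(complex_of_real (h k) * (- \<i> * complex_of_real c * exp (- \<i> * complex_of_real (c * k)))
      + complex_of_real h' * exp (- \<i> * complex_of_real (c * k))) / (- \<i> * complex_of_real c)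
    = complex_of_real (h k) * exp (- \<i> * complex_of_real (c * k))
      + complex_of_real h' * exp (- \<i> * complex_of_real (c * k)) / (- \<i> * complex_of_real c)"
    using c by (simp add: field_simps)
  ultimately show ?thesis by simp
qed

lemma exp_minus_i_int_pi:
  "exp (- \<i> * complex_of_real (of_int n * pi)) = exp (\<i> * complex_of_real (of_int n * pi))"
proof -
  have "cis (- (of_int n * pi)) = cis (of_int n * pi)"
    using sin_npi_int[of n] by (simp add: complex_eq_iff mult.commute)
  then show ?thesis by (simp add: cis_conv_exp)
qed

text \<open>On \<open>c \<in> \<epsilon>\<int>\<close> the boundary terms at \<open>\<plusminus>\<pi>/\<epsilon>\<close> cancel.\<close>

lemma lattice_kernel_integration_by_parts:
  fixes \<epsilon> t :: real and n :: int
  assumes e: "\<epsilon> > 0" and n: "n \<noteq> 0"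
  defines "c \<equiv> \<epsilon> * of_int n"
  shows "lattice_kernel \<epsilon> t c = integral {-pi/\<epsilon>..pi/\<epsilon>} (\<lambda>k.
     complex_of_real (t * (2 * sin (\<epsilon> * k) / \<epsilon>) * exp (- t * lattice_symb \<epsilon> k))
       * exp (- \<i> * complex_of_real (c * k)) / (- \<i> * complex_of_real c))"
proof -
  define a b where "a = - pi / \<epsilon>" and "b = pi / \<epsilon>"
  have c0: "c \<noteq> 0" using e n by (simp add: c_def)
  define h where "h k = exp (- t * lattice_symb \<epsilon> k)" for k
  define h' where "h' k = - t * (2 * sin (\<epsilon> * k) / \<epsilon>) * h k" for k
  define E where "E k = exp (- \<i> * complex_of_real (c * k))" for k
  define F where "F k = complex_of_real (h k) * E k / (- \<i> * complex_of_real c)" for k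
  define g where "g k = complex_of_real (h' k) * E k / (- \<i> * complex_of_real c)" for k
  have "(h has_real_derivative h' k) (at k)" for k
    unfolding h_def h'_def using e
    by (auto intro!: derivative_eq_intros has_real_derivative_lattice_symb)
  then have "(h has_real_derivative h' k) (at k within {a..b})" for k
    by (rule has_field_derivative_at_within)
  then have "(F has_vector_derivative complex_of_real (h k) * E k + g k) (at k within {a..b})" for k
    unfolding F_def E_def g_def using c0 by (rule has_vector_derivative_mult_exp_minus_i_div)
  then have "((\<lambda>k. complex_of_real (h k) * E k + g k) has_integral (F b - F a)) {a..b}"
    using e by (intro fundamental_theorem_of_calculus) (auto simp: a_def b_def)
  moreover have "F b = F a"
  proof -
    have "h b = h a" by (simp add: h_def a_def b_def lattice_symb_eq power2_eq_square)
    moreover have "E b = E a"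
      using e exp_minus_i_int_pi[of n] by (simp add: E_def c_def a_def b_def)
    ultimately show ?thesis by (simp add: F_def)
  qed
  moreover have "(g has_integral integral {a..b} g) {a..b}"
    unfolding g_def h'_def h_def E_def
    by (intro integrable_integral integrable_continuous_interval continuous_intros
        continuous_on_exp_lattice_symb) (use c0 e in auto)
  ultimately have "((\<lambda>k. (complex_of_real (h k) * E k + g k) - g k) has_integral 0 - integral {a..b} g) {a..b}"
    by (intro has_integral_diff) simp_all
  then have "integral {a..b} (\<lambda>k. complex_of_real (h k) * E k) = integral {a..b} (\<lambda>k. - g k)"
    by (simp add: integral_unique)
  then show ?thesis
    unfolding lattice_kernel_eq_integral a_def b_def g_def h'_def h_def E_def
    by (simp add: scaleR_conv_of_real)
qed

lemma norm_lattice_kernel_lattice_point_le: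
  fixes \<epsilon> t :: real and n :: int
  assumes e: "\<epsilon> > 0" and t: "t > 0" and n: "n \<noteq> 0"
  defines "c \<equiv> \<epsilon> * of_int n"
  shows "norm (lattice_kernel \<epsilon> t c) \<le> 2 * sqrt t / \<bar>c\<bar> * lattice_mass \<epsilon> (t / 2)"
proof -
  have c0: "c \<noteq> 0" using e n by (simp add: c_def)
  have bound: "norm (complex_of_real (t * (2 * sin (\<epsilon> * k) / \<epsilon>) * exp (- t * lattice_symb \<epsilon> k))
       * exp (- \<i> * complex_of_real (c * k)) / (- \<i> * complex_of_real c))
      \<le> 2 * sqrt t / \<bar>c\<bar> * exp (- (t / 2) * lattice_symb \<epsilon> k)" for k
  proof -
    define s where "s = lattice_symb \<epsilon> k"
    have s: "0 \<le> s" unfolding s_def by (rule lattice_symb_nonneg)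
    have "norm (exp (- \<i> * complex_of_real (c * k))) = 1" by simp
    then have "norm (complex_of_real (t * (2 * sin (\<epsilon> * k) / \<epsilon>) * exp (- t * s))
       * exp (- \<i> * complex_of_real (c * k)) / (- \<i> * complex_of_real c))
        = \<bar>2 * sin (\<epsilon> * k) / \<epsilon>\<bar> * (t * exp (- t * s)) / \<bar>c\<bar>"
      using t by (simp add: norm_divide norm_mult abs_mult)
    also have "\<dots> \<le> 2 * sqrt s * (t * exp (- t * s)) / \<bar>c\<bar>"
      using t unfolding s_def by (intro divide_right_mono mult_right_mono abs_deriv_lattice_symb_le) auto
    also have "\<dots> = 2 * sqrt t / \<bar>c\<bar> * (sqrt (t * s) * exp (- (t * s)))"
      using t by (simp add: real_sqrt_mult)
    also have "\<dots> \<le> 2 * sqrt t / \<bar>c\<bar> * exp (- (t / 2) * s)"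
      using t s sqrt_mult_exp_neg_le[of "t * s"] by (intro mult_left_mono) auto
    finally show ?thesis unfolding s_def .
  qed
  have "norm (lattice_kernel \<epsilon> t c)
      \<le> integral {-pi/\<epsilon>..pi/\<epsilon>} (\<lambda>k. 2 * sqrt t / \<bar>c\<bar> * exp (- (t / 2) * lattice_symb \<epsilon> k))"
    unfolding lattice_kernel_integration_by_parts[OF e n, of t, folded c_def]
    by (rule integral_norm_bound_integral[OF _ _ bound])
      (use c0 e in \<open>auto intro!: integrable_continuous_interval continuous_intros continuous_on_lattice_symb\<close>)
  also have "\<dots> = 2 * sqrt t / \<bar>c\<bar> * lattice_mass \<epsilon> (t / 2)"
    by (simp add: lattice_mass_eq_integral)
  finally show ?thesis .
qed

section \<open>Schwinger representation of the Green function\<close>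

definition gauss_wave :: "real \<Rightarrow> real \<Rightarrow> real \<Rightarrow> complex" where
  "gauss_wave t \<xi> y = exp (- t * y\<^sup>2) *\<^sub>R exp (- \<i> * complex_of_real (\<xi> * y))"

definition green_domain :: "real \<Rightarrow> ((real \<times> real) \<times> (real \<times> real)) set" where
  "green_domain \<epsilon> = UNIV \<times> ({-pi/\<epsilon>..pi/\<epsilon>} \<times> {-pi/\<epsilon>..pi/\<epsilon>})"

definition schwinger_integrand ::
    "real \<Rightarrow> real \<Rightarrow> real \<times> real \<Rightarrow> real \<times> real \<Rightarrow> real \<Rightarrow> (real \<times> real) \<times> (real \<times> real) \<Rightarrow> complex"
  where
  "schwinger_integrand m \<epsilon> x z t w = indicator {0..} t *\<^sub>R indicator (green_domain \<epsilon>) w *\<^sub>R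
     ((t * exp (- t * symb m \<epsilon> (fst w) (snd w))) *\<^sub>R exp (- \<i> * complex_of_real (x \<bullet> fst w + snd w \<bullet> z)))"

lemma symb_eq: "symb m \<epsilon> (y1, y2) (k1, k2) = y1\<^sup>2 + y2\<^sup>2 + lattice_symb \<epsilon> k1 + lattice_symb \<epsilon> k2 + m\<^sup>2"
  by (simp add: symb_def lattice_symb_def norm_Pair)

lemma schwinger_integrand_factor:
  assumes t: "t \<ge> 0"
  shows "schwinger_integrand m \<epsilon> x z t w = (t * exp (- t * m\<^sup>2)) *\<^sub>R
    ((gauss_wave t (fst x) (fst (fst w)) * gauss_wave t (snd x) (snd (fst w))) *
     (lattice_wave \<epsilon> t (fst z) (fst (snd w)) * lattice_wave \<epsilon> t (snd z) (snd (snd w))))"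
proof -
  obtain y1 y2 k1 k2 where w: "w = ((y1, y2), (k1, k2))" by (metis prod.collapse)
  obtain x1 x2 where x: "x = (x1, x2)" by (metis prod.collapse)
  obtain z1 z2 where z: "z = (z1, z2)" by (metis prod.collapse)
  have e1: "exp (- t * (y1\<^sup>2 + y2\<^sup>2 + lattice_symb \<epsilon> k1 + lattice_symb \<epsilon> k2 + m\<^sup>2)) =
     exp (- t * m\<^sup>2) * (exp (- t * y1\<^sup>2) * exp (- t * y2\<^sup>2) *
       (exp (- t * lattice_symb \<epsilon> k1) * exp (- t * lattice_symb \<epsilon> k2)))"
    by (simp flip: exp_add add: algebra_simps)
  have e2: "exp (- \<i> * complex_of_real (x1 * y1 + x2 * y2 + (k1 * z1 + k2 * z2))) =
     exp (- \<i> * complex_of_real (x1 * y1)) * exp (- \<i> * complex_of_real (x2 * y2)) *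
     (exp (- \<i> * complex_of_real (z1 * k1)) * exp (- \<i> * complex_of_real (z2 * k2)))"
    by (simp flip: exp_add add: algebra_simps)
  let ?I = "{-pi/\<epsilon>..pi/\<epsilon>}"
  have L: "schwinger_integrand m \<epsilon> x z t w = (if k1 \<in> ?I \<and> k2 \<in> ?I then
      (t * exp (- t * (y1\<^sup>2 + y2\<^sup>2 + lattice_symb \<epsilon> k1 + lattice_symb \<epsilon> k2 + m\<^sup>2))) *\<^sub>R
        exp (- \<i> * complex_of_real (x1 * y1 + x2 * y2 + (k1 * z1 + k2 * z2))) else 0)"
    using t by (auto simp: schwinger_integrand_def green_domain_def w x z symb_eq indicator_def)
  have R: "(t * exp (- t * m\<^sup>2)) *\<^sub>R
    ((gauss_wave t (fst x) (fst (fst w)) * gauss_wave t (snd x) (snd (fst w))) *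
     (lattice_wave \<epsilon> t (fst z) (fst (snd w)) * lattice_wave \<epsilon> t (snd z) (snd (snd w)))) =
     (if k1 \<in> ?I \<and> k2 \<in> ?I then (t * exp (- t * m\<^sup>2)) *\<^sub>R
       ((exp (- t * y1\<^sup>2) *\<^sub>R exp (- \<i> * complex_of_real (x1 * y1)) *
         (exp (- t * y2\<^sup>2) *\<^sub>R exp (- \<i> * complex_of_real (x2 * y2)))) *
        (exp (- t * lattice_symb \<epsilon> k1) *\<^sub>R exp (- \<i> * complex_of_real (z1 * k1)) *
         (exp (- t * lattice_symb \<epsilon> k2) *\<^sub>R exp (- \<i> * complex_of_real (z2 * k2))))) else 0)"
    by (auto simp: gauss_wave_def lattice_wave_def w x z indicator_def)
  show ?thesis
    unfolding L R e1 e2 by (simp add: scaleR_conv_of_real ac_simps)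
qed

lemma has_bochner_integral_gauss_wave:
  "t > 0 \<Longrightarrow>
    has_bochner_integral lborel (gauss_wave t \<xi>) (complex_of_real (sqrt (pi / t) * exp (- \<xi>\<^sup>2 / (4 * t))))"
  unfolding gauss_wave_def[abs_def] by (rule has_bochner_integral_gaussian_fourier)

lemma norm_gauss_wave: "norm (gauss_wave t \<xi> y) = exp (- t * y\<^sup>2)"
  by (simp add: gauss_wave_def)

lemma schwinger_slice_integral:
  assumes t: "t > 0"
  shows "integrable lborel (schwinger_integrand m \<epsilon> x z t)"
    and "integral\<^sup>L lborel (schwinger_integrand m \<epsilon> x z t) =
      (pi * exp (- t * m\<^sup>2) * exp (- (norm x)\<^sup>2 / (4 * t))) *\<^sub>R
        (lattice_kernel \<epsilon> t (fst z) * lattice_kernel \<epsilon> t (snd z))"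
proof -
  define g where "g \<xi> = sqrt (pi / t) * exp (- \<xi>\<^sup>2 / (4 * t))" for \<xi>
  define P1 where "P1 p = gauss_wave t (fst x) (fst p) * gauss_wave t (snd x) (snd p)" for p :: "real \<times> real"
  define P2 where "P2 q = lattice_wave \<epsilon> t (fst z) (fst q) * lattice_wave \<epsilon> t (snd z) (snd q)" for q :: "real \<times> real"
  have eq: "schwinger_integrand m \<epsilon> x z t = (\<lambda>w. (t * exp (- t * m\<^sup>2)) *\<^sub>R (P1 (fst w) * P2 (snd w)))"
    using t by (auto simp: fun_eq_iff schwinger_integrand_factor P1_def P2_def)
  have G: "integrable lborel (gauss_wave t \<xi>)"
    "integral\<^sup>L lborel (gauss_wave t \<xi>) = complex_of_real (g \<xi>)" for \<xi>
    using has_bochner_integral_gauss_wave[OF t, of \<xi>] by (auto simp: has_bochner_integral_iff g_def)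
  have P1: "integrable lborel P1" "integral\<^sup>L lborel P1 = complex_of_real (g (fst x) * g (snd x))"
    unfolding P1_def[abs_def] using lborel_pair_mult[OF G(1) G(1)] G(2) by auto
  have P2: "integrable lborel P2"
    "integral\<^sup>L lborel P2 = lattice_kernel \<epsilon> t (fst z) * lattice_kernel \<epsilon> t (snd z)"
    unfolding P2_def[abs_def] lattice_kernel_def
    using lborel_pair_mult[OF integrable_lattice_wave integrable_lattice_wave] by auto
  show "integrable lborel (schwinger_integrand m \<epsilon> x z t)"
    unfolding eq by (intro integrable_scaleR_right lborel_pair_mult(1)[OF P1(1) P2(1)])
  have "exp (- (fst x)\<^sup>2 / (4 * t)) * exp (- (snd x)\<^sup>2 / (4 * t)) = exp (- (norm x)\<^sup>2 / (4 * t))"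
    using t by (simp add: norm_prod_def field_simps flip: exp_add)
  then have "t * (g (fst x) * g (snd x)) = pi * exp (- (norm x)\<^sup>2 / (4 * t))"
    using t by (simp add: g_def mult_ac)
  then show "integral\<^sup>L lborel (schwinger_integrand m \<epsilon> x z t) =
      (pi * exp (- t * m\<^sup>2) * exp (- (norm x)\<^sup>2 / (4 * t))) *\<^sub>R
        (lattice_kernel \<epsilon> t (fst z) * lattice_kernel \<epsilon> t (snd z))"
    unfolding eq integral_scaleR_right lborel_pair_mult(2)[OF P1(1) P2(1)] P1(2) P2(2)
    by (simp add: scaleR_conv_of_real mult.assoc flip: of_real_mult)
qed

lemma norm_schwinger_slice_integral:
  assumes t: "t > 0"
  shows "integrable lborel (\<lambda>w. norm (schwinger_integrand m \<epsilon> x z t w))"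
    and "integral\<^sup>L lborel (\<lambda>w. norm (schwinger_integrand m \<epsilon> x z t w))
      = pi * exp (- t * m\<^sup>2) * (lattice_mass \<epsilon> t)\<^sup>2"
proof -
  define g where "g y = exp (- t * y\<^sup>2)" for y :: real
  define h where "h k = indicator {-pi/\<epsilon>..pi/\<epsilon>} k * exp (- t * lattice_symb \<epsilon> k)" for k :: real
  define P1 where "P1 p = g (fst p) * g (snd p)" for p :: "real \<times> real"
  define P2 where "P2 q = h (fst q) * h (snd q)" for q :: "real \<times> real"
  have eq: "(\<lambda>w. norm (schwinger_integrand m \<epsilon> x z t w))
      = (\<lambda>w. (t * exp (- t * m\<^sup>2)) * (P1 (fst w) * P2 (snd w)))"
    using t by (auto simp: fun_eq_iff schwinger_integrand_factor P1_def P2_def norm_mult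
        norm_gauss_wave norm_lattice_wave g_def h_def)
  have G1: "integrable lborel g" "integral\<^sup>L lborel g = sqrt (pi / t)"
    using has_bochner_integral_gaussian[OF t] by (auto simp: has_bochner_integral_iff g_def[abs_def])
  have K1: "integrable lborel h" "integral\<^sup>L lborel h = lattice_mass \<epsilon> t"
    unfolding h_def[abs_def] lattice_mass_def using integrable_lattice_mass[of \<epsilon> t] by auto
  have iP1: "integrable lborel P1" and vP1: "integral\<^sup>L lborel P1 = sqrt (pi / t) * sqrt (pi / t)"
    unfolding P1_def[abs_def] using lborel_pair_mult[OF G1(1) G1(1)] G1(2) by auto
  have iP2: "integrable lborel P2" and vP2: "integral\<^sup>L lborel P2 = lattice_mass \<epsilon> t * lattice_mass \<epsilon> t"
    unfolding P2_def[abs_def] using lborel_pair_mult[OF K1(1) K1(1)] K1(2) by auto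
  show "integrable lborel (\<lambda>w. norm (schwinger_integrand m \<epsilon> x z t w))"
    unfolding eq by (intro integrable_mult_right lborel_pair_mult(1)[OF iP1 iP2])
  show "integral\<^sup>L lborel (\<lambda>w. norm (schwinger_integrand m \<epsilon> x z t w))
      = pi * exp (- t * m\<^sup>2) * (lattice_mass \<epsilon> t)\<^sup>2"
    unfolding eq integral_mult_right_zero lborel_pair_mult(2)[OF iP1 iP2] vP1 vP2
    using t by (simp add: power2_eq_square)
qed

lemma schwinger_integrand_nonpos: "t \<le> 0 \<Longrightarrow> schwinger_integrand m \<epsilon> x z t w = 0"
  by (cases "t = 0") (auto simp: schwinger_integrand_def)

lemma symb_pos: "m > 0 \<Longrightarrow> symb m \<epsilon> y k > 0"
  by (cases y; cases k) (auto simp: symb_eq intro!: add_nonneg_pos add_nonneg_nonneg lattice_symb_nonneg)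

lemma borel_measurable_schwinger_integrand:
  "(\<lambda>(t, w). schwinger_integrand m \<epsilon> x z t w) \<in> borel_measurable (lborel \<Otimes>\<^sub>M lborel)"
proof -
  define f where "f = (\<lambda>(t, w). (t * exp (- t * symb m \<epsilon> (fst w) (snd w))) *\<^sub>R
    exp (- \<i> * complex_of_real (x \<bullet> fst w + snd w \<bullet> z)))"
  have "continuous_on UNIV f"
    unfolding f_def symb_def case_prod_beta by (intro continuous_intros) auto
  moreover have "closed ({0::real..} \<times> green_domain \<epsilon>)"
    unfolding green_domain_def by (intro closed_Times closed_atLeast) auto
  ultimately have "(\<lambda>p. indicator ({0::real..} \<times> green_domain \<epsilon>) p *\<^sub>R f p) \<in> borel_measurable borel"
    by (intro borel_measurable_scaleR borel_measurable_indicator borel_closed borel_measurable_continuous_onI)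
  moreover have "(\<lambda>(t, w). schwinger_integrand m \<epsilon> x z t w)
      = (\<lambda>p. indicator ({0::real..} \<times> green_domain \<epsilon>) p *\<^sub>R f p)"
    by (auto simp: fun_eq_iff schwinger_integrand_def f_def split: split_indicator)
  ultimately show ?thesis by (simp add: lborel_prod)
qed

lemma has_bochner_integral_schwinger_time:
  assumes m: "m > 0"
  shows "has_bochner_integral lborel (\<lambda>t. schwinger_integrand m \<epsilon> x z t w)
    (indicator (green_domain \<epsilon>) w *\<^sub>R
      (exp (- \<i> * complex_of_real (x \<bullet> fst w + snd w \<bullet> z)) / complex_of_real ((symb m \<epsilon> (fst w) (snd w))\<^sup>2)))"
proof -
  define s where "s = symb m \<epsilon> (fst w) (snd w)"
  define E where "E = indicator (green_domain \<epsilon>) w *\<^sub>R exp (- \<i> * complex_of_real (x \<bullet> fst w + snd w \<bullet> z))"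
  have s0: "s > 0" unfolding s_def by (rule symb_pos[OF m])
  have eq: "(\<lambda>t. schwinger_integrand m \<epsilon> x z t w) = (\<lambda>t. (t * exp (- s * t) * indicator {0..} t) *\<^sub>R E)"
    by (auto simp: fun_eq_iff schwinger_integrand_def E_def s_def split: split_indicator)
  have "has_bochner_integral lborel (\<lambda>t. (t * exp (- s * t) * indicator {0..} t) *\<^sub>R E) ((1 / s\<^sup>2) *\<^sub>R E)"
    by (rule has_bochner_integral_scaleR_left) (use has_bochner_integral_mult_exp_atLeast0[OF s0] in auto)
  moreover have "(1 / s\<^sup>2) *\<^sub>R E = indicator (green_domain \<epsilon>) w *\<^sub>R
      (exp (- \<i> * complex_of_real (x \<bullet> fst w + snd w \<bullet> z)) / complex_of_real ((symb m \<epsilon> (fst w) (snd w))\<^sup>2))"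
    unfolding E_def s_def[symmetric] by (simp add: scaleR_conv_of_real field_simps)
  ultimately show ?thesis unfolding eq by simp
qed

lemma norm_schwinger_slice_integral_le:
  assumes e: "\<epsilon> > 0"
  shows "(\<integral>w. norm (schwinger_integrand m \<epsilon> x z t w) \<partial>lborel)
    \<le> pi * (2 * pi / \<epsilon>)\<^sup>2 * (exp (- m\<^sup>2 * t) * indicator {0..} t)"
proof (cases "t > 0")
  case t: True
  have "(lattice_mass \<epsilon> t)\<^sup>2 \<le> (2 * pi / \<epsilon>)\<^sup>2"
    using lattice_mass_le[OF e, of t] lattice_mass_nonneg t by (intro power_mono) auto
  then have "pi * exp (- t * m\<^sup>2) * (lattice_mass \<epsilon> t)\<^sup>2 \<le> pi * exp (- t * m\<^sup>2) * (2 * pi / \<epsilon>)\<^sup>2"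
    by (intro mult_left_mono) auto
  then show ?thesis
    using t unfolding norm_schwinger_slice_integral(2)[OF t] by (simp add: mult_ac)
next
  case False
  then show ?thesis by (simp add: schwinger_integrand_nonpos)
qed

lemma integrable_schwinger_integrand:
  assumes m: "m > 0" and e: "\<epsilon> > 0"
  shows "integrable (lborel \<Otimes>\<^sub>M lborel) (\<lambda>(t, w). schwinger_integrand m \<epsilon> x z t w)"
proof (rule lborel_pair.Fubini_integrable)
  show "(\<lambda>(t, w). schwinger_integrand m \<epsilon> x z t w) \<in> borel_measurable (lborel \<Otimes>\<^sub>M lborel)"
    by (rule borel_measurable_schwinger_integrand)
  show "AE t in lborel. integrable lborel (\<lambda>w. case_prod (schwinger_integrand m \<epsilon> x z) (t, w))"
  proof (rule AE_I2)
    fix t :: real show "integrable lborel (\<lambda>w. case_prod (schwinger_integrand m \<epsilon> x z) (t, w))"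
    proof (cases "t > 0")
      case True then show ?thesis using schwinger_slice_integral(1)[OF True] by simp
    next
      case False then show ?thesis by (simp add: schwinger_integrand_nonpos)
    qed
  qed
  have mm: "(\<lambda>t. \<integral>w. norm (schwinger_integrand m \<epsilon> x z t w) \<partial>lborel) \<in> borel_measurable lborel"
  proof -
    have "(\<lambda>(t, w). norm (schwinger_integrand m \<epsilon> x z t w)) \<in> borel_measurable (lborel \<Otimes>\<^sub>M lborel)"
      using borel_measurable_schwinger_integrand[of m \<epsilon> x z]
      by (simp add: case_prod_beta' borel_measurable_norm)
    then show ?thesis by (rule lborel.borel_measurable_lebesgue_integral)
  qed
  have iB: "integrable lborel (\<lambda>t. pi * (2 * pi / \<epsilon>)\<^sup>2 * (exp (- m\<^sup>2 * t) * indicator {0..} t))"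
    using has_bochner_integral_exp_atLeast[of "m\<^sup>2" 0] m
    by (intro integrable_mult_right) (auto simp: has_bochner_integral_iff)
  have "norm (\<integral>w. norm (schwinger_integrand m \<epsilon> x z t w) \<partial>lborel)
      \<le> norm (pi * (2 * pi / \<epsilon>)\<^sup>2 * (exp (- m\<^sup>2 * t) * indicator {0..} t))" for t
    using norm_schwinger_slice_integral_le[OF e, of m x z t] by (simp add: integral_nonneg_AE)
  then show "integrable lborel (\<lambda>t. \<integral>w. norm (case_prod (schwinger_integrand m \<epsilon> x z) (t, w)) \<partial>lborel)"
    using Bochner_Integration.integrable_bound[OF iB mm] by simp
qed

lemma Green_eq_schwinger:
  assumes m: "m > 0" and e: "\<epsilon> > 0"
  shows "Green m \<epsilon> x z =
    complex_of_real (1 / (2 * pi) ^ 4) * (\<integral>t. (\<integral>w. schwinger_integrand m \<epsilon> x z t w \<partial>lborel) \<partial>lborel)"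
proof -
  have "(LINT w : (UNIV \<times> ({-pi/\<epsilon>..pi/\<epsilon>} \<times> {-pi/\<epsilon>..pi/\<epsilon>})) | lborel.
        exp (- \<i> * complex_of_real (x \<bullet> fst w + snd w \<bullet> z)) / complex_of_real ((symb m \<epsilon> (fst w) (snd w))\<^sup>2))
     = (\<integral>w. (\<integral>t. schwinger_integrand m \<epsilon> x z t w \<partial>lborel) \<partial>lborel)"
    unfolding set_lebesgue_integral_def green_domain_def[symmetric]
    using has_bochner_integral_integral_eq[OF has_bochner_integral_schwinger_time[OF m]] by simp
  also have "\<dots> = (\<integral>t. (\<integral>w. schwinger_integrand m \<epsilon> x z t w \<partial>lborel) \<partial>lborel)"
    by (rule lborel_pair.Fubini_integral) (use integrable_schwinger_integrand[OF m e, of x z] in simp)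
  finally show ?thesis unfolding Green_def by simp
qed

definition green_time_density :: "real \<Rightarrow> real \<Rightarrow> real \<times> real \<Rightarrow> real \<times> real \<Rightarrow> real \<Rightarrow> real" where
  "green_time_density m \<epsilon> x z t = indicator {0<..} t *
     (exp (- t * m\<^sup>2) * exp (- (norm x)\<^sup>2 / (4 * t)) *
      (norm (lattice_kernel \<epsilon> t (fst z)) * norm (lattice_kernel \<epsilon> t (snd z))))"

lemma norm_Green_le_time_integral:
  assumes m: "m > 0" and e: "\<epsilon> > 0"
  shows "integrable lborel (green_time_density m \<epsilon> x z)"
    and "norm (Green m \<epsilon> x z) \<le> 1 / (16 * pi ^ 3) * integral\<^sup>L lborel (green_time_density m \<epsilon> x z)"
proof -
  define T where "T t = (\<integral>w. schwinger_integrand m \<epsilon> x z t w \<partial>lborel)" for t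
  have iT: "integrable lborel T"
    unfolding T_def using lborel_pair.integrable_fst'[OF integrable_schwinger_integrand[OF m e, of x z]] by simp
  have nT: "norm (T t) = pi * green_time_density m \<epsilon> x z t" for t
  proof (cases "t > 0")
    case True
    then show ?thesis
      unfolding T_def green_time_density_def schwinger_slice_integral(2)[OF True]
      by (simp add: norm_mult abs_mult)
  next
    case False
    then have "schwinger_integrand m \<epsilon> x z t = (\<lambda>w. 0)"
      by (simp add: fun_eq_iff schwinger_integrand_nonpos)
    with False show ?thesis unfolding T_def green_time_density_def by simp
  qed
  have eqQ: "green_time_density m \<epsilon> x z = (\<lambda>t. norm (T t) / pi)" by (simp add: fun_eq_iff nT)
  show "integrable lborel (green_time_density m \<epsilon> x z)" unfolding eqQ using iT by auto
  have "norm (Green m \<epsilon> x z) = 1 / (2 * pi) ^ 4 * norm (integral\<^sup>L lborel T)"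
    unfolding Green_eq_schwinger[OF m e] T_def by (simp only: norm_mult norm_of_real) simp
  also have "\<dots> \<le> 1 / (2 * pi) ^ 4 * integral\<^sup>L lborel (\<lambda>t. norm (T t))"
    by (intro mult_left_mono integral_norm_bound) auto
  also have "integral\<^sup>L lborel (\<lambda>t. norm (T t)) = pi * integral\<^sup>L lborel (green_time_density m \<epsilon> x z)"
    unfolding nT by simp
  also have "1 / (2 * pi) ^ 4 * (pi * integral\<^sup>L lborel (green_time_density m \<epsilon> x z))
      = 1 / (16 * pi ^ 3) * integral\<^sup>L lborel (green_time_density m \<epsilon> x z)"
    by (simp add: field_simps power_mult_distrib power_Suc[symmetric] del: power_Suc)
  finally show "norm (Green m \<epsilon> x z) \<le> 1 / (16 * pi ^ 3) * integral\<^sup>L lborel (green_time_density m \<epsilon> x z)" .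
qed

section \<open>Estimates of the time density\<close>

lemma green_time_density_le_product:
  assumes "t > 0"
  shows "green_time_density m \<epsilon> x z t
    \<le> exp (- (norm x)\<^sup>2 / (4 * t)) * (norm (lattice_kernel \<epsilon> t (fst z)) * norm (lattice_kernel \<epsilon> t (snd z)))"
  using assms by (simp add: green_time_density_def mult_left_le_one_le)

lemma green_time_density_le_mass:
  assumes "t > 0"
  shows "green_time_density m \<epsilon> x z t \<le> exp (- t * m\<^sup>2) * (lattice_mass \<epsilon> t)\<^sup>2"
proof -
  have "exp (- (norm x)\<^sup>2 / (4 * t)) * (norm (lattice_kernel \<epsilon> t (fst z)) * norm (lattice_kernel \<epsilon> t (snd z)))
      \<le> norm (lattice_kernel \<epsilon> t (fst z)) * norm (lattice_kernel \<epsilon> t (snd z))"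
    using assms by (intro mult_left_le_one_le) auto
  also have "\<dots> \<le> (lattice_mass \<epsilon> t)\<^sup>2"
    unfolding power2_eq_square by (intro mult_mono norm_lattice_kernel_le lattice_mass_nonneg) auto
  finally have "exp (- (norm x)\<^sup>2 / (4 * t)) * (norm (lattice_kernel \<epsilon> t (fst z)) * norm (lattice_kernel \<epsilon> t (snd z)))
      \<le> (lattice_mass \<epsilon> t)\<^sup>2" .
  then show ?thesis
    using assms by (simp add: green_time_density_def mult.assoc mult_left_mono)
qed

locale green_parameters =
  fixes \<theta> \<delta> :: real
  assumes \<theta>_pos: "0 < \<theta>" and \<theta>_le_1: "\<theta> \<le> 1" and \<delta>_pos: "0 < \<delta>"
begin

definition "\<gamma> = (1 - \<theta>\<^sup>2 / 24)\<^sup>2"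
definition "\<eta> = \<gamma> * \<theta>\<^sup>2"
definition "K_log = (1 + \<delta>) * pi / \<gamma>"
definition "K_exp = (1 + 1 / \<delta>) * (4 * pi\<^sup>2)"
definition "A_mass = sqrt (pi / \<gamma>) + 2 * pi / sqrt \<eta>"
definition "A_far = 2 * sqrt 2 * A_mass"
definition "B_short = sqrt 8 * A_mass\<^sup>2 + 2 * A_far * A_mass"

lemma \<gamma>_pos: "\<gamma> > 0"
  using \<theta>_pos \<theta>_le_1 power_le_one[of \<theta> 2] by (simp add: \<gamma>_def)

lemma \<eta>_pos: "\<eta> > 0"
  using \<gamma>_pos \<theta>_pos by (simp add: \<eta>_def)

lemma K_log_pos: "K_log > 0"
  using \<gamma>_pos \<delta>_pos by (simp add: K_log_def)

lemma K_exp_pos: "K_exp > 0"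
  using \<delta>_pos by (simp add: K_exp_def add_pos_pos)

lemma A_mass_pos: "A_mass > 0"
  using \<gamma>_pos \<eta>_pos by (simp add: A_mass_def add_pos_pos)

lemma A_far_pos: "A_far > 0"
  using A_mass_pos by (simp add: A_far_def)

lemma B_short_pos: "B_short > 0"
  using A_mass_pos A_far_pos by (simp add: B_short_def add_pos_pos)

lemma lattice_mass_le_split:
  assumes "\<epsilon> > 0" "t > 0"
  shows "lattice_mass \<epsilon> t \<le> sqrt (pi / (\<gamma> * t)) + 2 * pi / \<epsilon> * exp (- t * \<eta> / \<epsilon>\<^sup>2)"
  using lattice_mass_le_gaussian[OF assms \<theta>_pos \<theta>_le_1] by (simp add: \<gamma>_def \<eta>_def)

lemma lattice_mass_square_le:
  assumes e: "\<epsilon> > 0" and t: "t > 0"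
  shows "(lattice_mass \<epsilon> t)\<^sup>2 \<le> K_log / t + K_exp * exp (- (2 * \<eta> / \<epsilon>\<^sup>2) * t) / \<epsilon>\<^sup>2"
proof -
  define a b where "a = sqrt (pi / (\<gamma> * t))" and "b = 2 * pi / \<epsilon> * exp (- t * \<eta> / \<epsilon>\<^sup>2)"
  have "(lattice_mass \<epsilon> t)\<^sup>2 \<le> (a + b)\<^sup>2"
    unfolding a_def b_def using lattice_mass_nonneg by (intro power_mono lattice_mass_le_split[OF e t])
  also have "\<dots> \<le> (1 + \<delta>) * a\<^sup>2 + (1 + 1 / \<delta>) * b\<^sup>2"
    using \<delta>_pos by (rule square_add_le_weighted)
  also have "(1 + \<delta>) * a\<^sup>2 = K_log / t"
    using t \<gamma>_pos by (simp add: a_def K_log_def)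
  also have "(1 + 1 / \<delta>) * b\<^sup>2 = K_exp * exp (- (2 * \<eta> / \<epsilon>\<^sup>2) * t) / \<epsilon>\<^sup>2"
    using e by (simp add: b_def K_exp_def power_mult_distrib power_divide field_simps flip: exp_of_nat_mult)
  finally show ?thesis .
qed

lemma lattice_mass_le_inverse_sqrt:
  assumes e: "\<epsilon> > 0" and t: "t > 0"
  shows "lattice_mass \<epsilon> t \<le> A_mass / sqrt t"
proof -
  have "exp (- t * \<eta> / \<epsilon>\<^sup>2) \<le> 1 / sqrt (t * \<eta> / \<epsilon>\<^sup>2)"
    using exp_neg_le_inverse_sqrt[of "t * \<eta> / \<epsilon>\<^sup>2"] e t \<eta>_pos by simp
  also have "\<dots> = \<epsilon> / (sqrt t * sqrt \<eta>)"
    using e by (simp add: real_sqrt_mult real_sqrt_divide)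
  finally have exp_le: "exp (- t * \<eta> / \<epsilon>\<^sup>2) \<le> \<epsilon> / (sqrt t * sqrt \<eta>)" .
  have "lattice_mass \<epsilon> t \<le> sqrt (pi / (\<gamma> * t)) + 2 * pi / \<epsilon> * exp (- t * \<eta> / \<epsilon>\<^sup>2)"
    by (rule lattice_mass_le_split[OF e t])
  also have "\<dots> \<le> sqrt (pi / (\<gamma> * t)) + 2 * pi / \<epsilon> * (\<epsilon> / (sqrt t * sqrt \<eta>))"
    using exp_le e by (intro add_left_mono mult_left_mono) auto
  also have "\<dots> = A_mass / sqrt t"
    using e t \<gamma>_pos \<eta>_pos by (simp add: A_mass_def real_sqrt_mult real_sqrt_divide field_simps)
  finally show ?thesis .
qed

lemma norm_lattice_kernel_far:
  assumes e: "\<epsilon> > 0" and t: "t > 0" and \<rho>: "\<rho> > 0" and far: "\<rho> / 2 \<le> \<bar>\<epsilon> * of_int n\<bar>"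
  shows "norm (lattice_kernel \<epsilon> t (\<epsilon> * of_int n)) \<le> 2 * A_far / \<rho>"
proof -
  have n: "n \<noteq> 0" using \<rho> far by auto
  have "norm (lattice_kernel \<epsilon> t (\<epsilon> * of_int n)) \<le> 2 * sqrt t / \<bar>\<epsilon> * of_int n\<bar> * lattice_mass \<epsilon> (t / 2)"
    by (rule norm_lattice_kernel_lattice_point_le[OF e t n])
  also have "\<dots> \<le> 2 * sqrt t / \<bar>\<epsilon> * of_int n\<bar> * (A_mass / sqrt (t / 2))"
    using e t n by (intro mult_left_mono lattice_mass_le_inverse_sqrt) auto
  also have "\<dots> = A_far / \<bar>\<epsilon> * of_int n\<bar>"
    using t by (simp add: A_far_def real_sqrt_divide field_simps)
  also have "\<dots> \<le> A_far / (\<rho> / 2)"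
    using far \<rho> A_far_pos e n by (intro divide_left_mono) auto
  finally show ?thesis by (simp add: mult.commute)
qed

lemma green_time_density_le_long:
  assumes e: "\<epsilon> > 0" and t: "t > 0"
  shows "green_time_density m \<epsilon> x z t
    \<le> exp (- t * m\<^sup>2) * (K_log / t) + K_exp / \<epsilon>\<^sup>2 * exp (- (2 * \<eta> / \<epsilon>\<^sup>2) * t)"
proof -
  have "green_time_density m \<epsilon> x z t \<le> exp (- t * m\<^sup>2) * (lattice_mass \<epsilon> t)\<^sup>2"
    by (rule green_time_density_le_mass[OF t])
  also have "\<dots> \<le> exp (- t * m\<^sup>2) * (K_log / t + K_exp * exp (- (2 * \<eta> / \<epsilon>\<^sup>2) * t) / \<epsilon>\<^sup>2)"
    by (intro mult_left_mono lattice_mass_square_le[OF e t]) simp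
  also have "\<dots> \<le> exp (- t * m\<^sup>2) * (K_log / t) + K_exp / \<epsilon>\<^sup>2 * exp (- (2 * \<eta> / \<epsilon>\<^sup>2) * t)"
    using t K_exp_pos mult_left_le_one_le[of "K_exp / \<epsilon>\<^sup>2 * exp (- (2 * \<eta> / \<epsilon>\<^sup>2) * t)" "exp (- t * m\<^sup>2)"]
    by (simp add: distrib_left mult_ac)
  finally show ?thesis .
qed

lemma green_time_density_le_lattice_scale:
  assumes e: "\<epsilon> > 0" and t: "t > 0"
  shows "green_time_density m \<epsilon> x z t \<le> (2 * pi / \<epsilon>)\<^sup>2"
proof -
  have "green_time_density m \<epsilon> x z t \<le> exp (- t * m\<^sup>2) * (lattice_mass \<epsilon> t)\<^sup>2"
    by (rule green_time_density_le_mass[OF t])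
  also have "\<dots> \<le> 1 * (2 * pi / \<epsilon>)\<^sup>2"
    using t lattice_mass_le[OF e, of t] lattice_mass_nonneg
    by (intro mult_mono power_mono) auto
  finally show ?thesis by simp
qed

lemma norm_lattice_kernel_le_inverse_sqrt:
  assumes "\<epsilon> > 0" "t > 0"
  shows "norm (lattice_kernel \<epsilon> t c) \<le> A_mass / sqrt t"
  using order_trans[OF norm_lattice_kernel_le lattice_mass_le_inverse_sqrt[OF assms]] .

lemma green_time_density_le_gaussian_far:
  assumes e: "\<epsilon> > 0" and t: "t > 0" and \<rho>: "\<rho> > 0" and x: "\<rho>\<^sup>2 / 2 \<le> (norm x)\<^sup>2"
  shows "green_time_density m \<epsilon> x z t \<le> sqrt 8 * A_mass\<^sup>2 / (\<rho> * sqrt t)"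
proof -
  have "exp (- (norm x)\<^sup>2 / (4 * t)) \<le> exp (- (\<rho>\<^sup>2 / (8 * t)))"
    using x t by (simp add: field_simps)
  also have "\<dots> \<le> 1 / sqrt (\<rho>\<^sup>2 / (8 * t))"
    using \<rho> t by (intro exp_neg_le_inverse_sqrt) simp
  also have "\<dots> = sqrt 8 * sqrt t / \<rho>"
    using \<rho> t by (simp add: real_sqrt_divide real_sqrt_mult)
  finally have "exp (- (norm x)\<^sup>2 / (4 * t)) * (norm (lattice_kernel \<epsilon> t (fst z)) * norm (lattice_kernel \<epsilon> t (snd z)))
      \<le> (sqrt 8 * sqrt t / \<rho>) * ((A_mass / sqrt t) * (A_mass / sqrt t))"
    using norm_lattice_kernel_le_inverse_sqrt[OF e t] A_mass_pos t \<rho> by (intro mult_mono) auto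
  also have "\<dots> = sqrt 8 * A_mass\<^sup>2 / (\<rho> * sqrt t)"
    using t \<rho> by (simp only: field_simps power2_eq_square) simp
  finally show ?thesis
    using green_time_density_le_product[OF t, of m \<epsilon> x z] by linarith
qed

lemma green_time_density_le_lattice_far:
  assumes e: "\<epsilon> > 0" and t: "t > 0" and z: "z \<in> lattice \<epsilon>"
    and \<rho>: "\<rho> > 0" and far: "\<rho>\<^sup>2 / 2 < (norm z)\<^sup>2"
  shows "green_time_density m \<epsilon> x z t \<le> 2 * A_far * A_mass / (\<rho> * sqrt t)"
proof -
  define l1 l2 where "l1 = norm (lattice_kernel \<epsilon> t (fst z))" and "l2 = norm (lattice_kernel \<epsilon> t (snd z))"
  have l: "0 \<le> l1" "l1 \<le> A_mass / sqrt t" "0 \<le> l2" "l2 \<le> A_mass / sqrt t"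
    unfolding l1_def l2_def using norm_lattice_kernel_le_inverse_sqrt[OF e t] by auto
  obtain a b :: int where zab: "z = (\<epsilon> * of_int a, \<epsilon> * of_int b)"
    using z unfolding lattice_def by auto
  have "(\<rho> / 2)\<^sup>2 \<le> (\<epsilon> * of_int a)\<^sup>2 \<or> (\<rho> / 2)\<^sup>2 \<le> (\<epsilon> * of_int b)\<^sup>2"
    using far by (auto simp: zab norm_prod_def power_divide)
  then have "\<rho> / 2 \<le> \<bar>\<epsilon> * of_int a\<bar> \<or> \<rho> / 2 \<le> \<bar>\<epsilon> * of_int b\<bar>"
    using \<rho> by (metis abs_le_square_iff abs_of_pos half_gt_zero)
  then consider "l1 \<le> 2 * A_far / \<rho>" | "l2 \<le> 2 * A_far / \<rho>"
    unfolding l1_def l2_def zab using norm_lattice_kernel_far[OF e t \<rho>] by auto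
  then have "l1 * l2 \<le> (2 * A_far / \<rho>) * (A_mass / sqrt t)"
  proof cases
    case 1
    then show ?thesis using l by (intro mult_mono) auto
  next
    case 2
    then have "l2 * l1 \<le> (2 * A_far / \<rho>) * (A_mass / sqrt t)"
      using l by (intro mult_mono) auto
    then show ?thesis by (simp add: mult.commute)
  qed
  moreover have "exp (- (norm x)\<^sup>2 / (4 * t)) * (l1 * l2) \<le> l1 * l2"
    using l t by (intro mult_left_le_one_le) auto
  ultimately show ?thesis
    using green_time_density_le_product[OF t, of m \<epsilon> x z] unfolding l1_def l2_def by simp
qed

lemma green_time_density_le_inverse_sqrt:
  assumes e: "\<epsilon> > 0" and t: "t > 0" and z: "z \<in> lattice \<epsilon>"
    and \<rho>: "\<rho> = sqrt ((norm x)\<^sup>2 + (norm z)\<^sup>2)" "\<rho> > 0"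
  shows "green_time_density m \<epsilon> x z t \<le> B_short / (\<rho> * sqrt t)"
proof -
  have st: "sqrt t > 0" using t by simp
  have "\<rho>\<^sup>2 = (norm x)\<^sup>2 + (norm z)\<^sup>2" using \<rho>(1) by simp
  then consider "\<rho>\<^sup>2 / 2 \<le> (norm x)\<^sup>2" | "\<rho>\<^sup>2 / 2 < (norm z)\<^sup>2"
    by linarith
  then show ?thesis
  proof cases
    case 1
    have "sqrt 8 * A_mass\<^sup>2 / (\<rho> * sqrt t) \<le> B_short / (\<rho> * sqrt t)"
      unfolding B_short_def using A_far_pos A_mass_pos \<rho>(2) st by (intro divide_right_mono) auto
    then show ?thesis
      using green_time_density_le_gaussian_far[OF e t \<rho>(2) 1, where m=m and z=z] by linarith
  next
    case 2
    have "2 * A_far * A_mass / (\<rho> * sqrt t) \<le> B_short / (\<rho> * sqrt t)"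
      unfolding B_short_def using A_mass_pos \<rho>(2) st by (intro divide_right_mono) auto
    then show ?thesis
      using green_time_density_le_lattice_far[OF e t z \<rho>(2) 2, where m=m and x=x] by linarith
  qed
qed

definition short_time_majorant :: "real \<Rightarrow> real \<Rightarrow> real \<Rightarrow> real" where
  "short_time_majorant \<epsilon> \<rho> t =
     (if \<rho> \<le> \<epsilon> then (2 * pi / \<epsilon>)\<^sup>2 * indicator {0..\<epsilon>\<^sup>2} t
      else B_short / \<rho> * (indicator {0..\<rho>\<^sup>2} t / sqrt t))"

definition green_majorant :: "real \<Rightarrow> real \<Rightarrow> real \<Rightarrow> real \<Rightarrow> real" where
  "green_majorant m \<epsilon> \<rho> t = short_time_majorant \<epsilon> \<rho> t
     + K_log * (indicator {(max \<rho> \<epsilon>)\<^sup>2..1} t / t)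
     + K_log * (exp (- m\<^sup>2 * t) * indicator {1..} t)
     + K_exp / \<epsilon>\<^sup>2 * (exp (- (2 * \<eta> / \<epsilon>\<^sup>2) * t) * indicator {0..} t)"

lemma green_majorant_nonneg:
  assumes "\<epsilon> > 0"
  shows "0 \<le> green_majorant m \<epsilon> \<rho> t"
proof -
  have "0 \<le> indicator {a..b} t / t" if "0 \<le> a" for a b :: real
    using that by (auto split: split_indicator)
  then have "0 \<le> indicator {(max \<rho> \<epsilon>)\<^sup>2..1} t / t" by simp
  then show ?thesis
    using assms K_log_pos K_exp_pos B_short_pos
    by (auto simp: green_majorant_def short_time_majorant_def split: split_indicator
        intro!: add_nonneg_nonneg mult_nonneg_nonneg)
qed

lemma green_time_density_le_long_time:
  assumes e: "\<epsilon> > 0" and t: "t > 0" and r: "r\<^sup>2 \<le> t"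
  shows "green_time_density m \<epsilon> x z t \<le> K_log * (indicator {r\<^sup>2..1} t / t)
    + K_log * (exp (- m\<^sup>2 * t) * indicator {1..} t)
    + K_exp / \<epsilon>\<^sup>2 * (exp (- (2 * \<eta> / \<epsilon>\<^sup>2) * t) * indicator {0..} t)"
proof -
  have "exp (- t * m\<^sup>2) * (K_log / t)
      \<le> K_log * (indicator {r\<^sup>2..1} t / t) + K_log * (exp (- m\<^sup>2 * t) * indicator {1..} t)"
  proof (cases "t \<le> 1")
    case True
    then show ?thesis
      using r t K_log_pos mult_left_le_one_le[of "K_log / t" "exp (- t * m\<^sup>2)"]
      by (simp add: indicator_def)
  next
    case False
    then have "K_log / t \<le> K_log" using K_log_pos by (simp add: field_simps)
    then have "exp (- t * m\<^sup>2) * (K_log / t) \<le> exp (- t * m\<^sup>2) * K_log"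
      by (intro mult_left_mono) auto
    then show ?thesis
      using False by (simp add: indicator_def ac_simps)
  qed
  then show ?thesis
    using green_time_density_le_long[OF e t, of m x z] t by simp
qed

lemma green_time_density_le_short_time:
  assumes e: "\<epsilon> > 0" and t: "t > 0" and z: "z \<in> lattice \<epsilon>"
    and \<rho>: "\<rho> = sqrt ((norm x)\<^sup>2 + (norm z)\<^sup>2)" and short: "t < (max \<rho> \<epsilon>)\<^sup>2"
  shows "green_time_density m \<epsilon> x z t \<le> short_time_majorant \<epsilon> \<rho> t"
proof (cases "\<rho> \<le> \<epsilon>")
  case True
  then show ?thesis
    using short t green_time_density_le_lattice_scale[OF e t]
    by (simp add: short_time_majorant_def)
next
  case False
  then have "\<rho> > 0" "t \<le> \<rho>\<^sup>2" using e short by auto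
  then show ?thesis
    using False t green_time_density_le_inverse_sqrt[OF e t z \<rho>]
    by (simp add: short_time_majorant_def)
qed

lemma green_time_density_le_majorant:
  fixes x z :: "real \<times> real"
  assumes e: "\<epsilon> > 0" and z: "z \<in> lattice \<epsilon>"
  defines "\<rho> \<equiv> sqrt ((norm x)\<^sup>2 + (norm z)\<^sup>2)"
  shows "green_time_density m \<epsilon> x z t \<le> green_majorant m \<epsilon> \<rho> t"
proof (cases "t > 0")
  case False
  then show ?thesis
    using green_majorant_nonneg[OF e] by (simp add: green_time_density_def)
next
  case t: True
  show ?thesis
  proof (cases "(max \<rho> \<epsilon>)\<^sup>2 \<le> t")
    case True
    have "0 \<le> short_time_majorant \<epsilon> \<rho> t"
      using e B_short_pos by (auto simp: short_time_majorant_def split: split_indicator)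
    then show ?thesis
      using green_time_density_le_long_time[OF e t True, of m x z] by (simp add: green_majorant_def)
  next
    case False
    have "0 \<le> K_log * (indicator {(max \<rho> \<epsilon>)\<^sup>2..1} t / t)"
      "0 \<le> K_log * (exp (- m\<^sup>2 * t) * indicator {1..} t)"
      "0 \<le> K_exp / \<epsilon>\<^sup>2 * (exp (- (2 * \<eta> / \<epsilon>\<^sup>2) * t) * indicator {0..} t)"
      using t K_log_pos K_exp_pos by (auto split: split_indicator)
    moreover have "green_time_density m \<epsilon> x z t \<le> short_time_majorant \<epsilon> \<rho> t"
      using False by (intro green_time_density_le_short_time[OF e t z \<rho>_def[THEN meta_eq_to_obj_eq]]) simp
    ultimately show ?thesis
      unfolding green_majorant_def by linarith
  qed
qed

lemma has_bochner_integral_short_time_majorant: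
  assumes e: "\<epsilon> > 0" and \<rho>: "\<rho> \<ge> 0"
  shows "has_bochner_integral lborel (short_time_majorant \<epsilon> \<rho>) (if \<rho> \<le> \<epsilon> then 4 * pi\<^sup>2 else 2 * B_short)"
proof (cases "\<rho> \<le> \<epsilon>")
  case True
  have "has_bochner_integral lborel (\<lambda>t. indicator {0..\<epsilon>\<^sup>2} t * (2 * pi / \<epsilon>)\<^sup>2) ((\<epsilon>\<^sup>2 - 0) * (2 * pi / \<epsilon>)\<^sup>2)"
    by (intro has_bochner_integral_indicator_Icc_mult) simp
  then show ?thesis
    using True e by (simp add: short_time_majorant_def[abs_def] mult.commute power_divide power_mult_distrib)
next
  case False
  then have "\<rho>\<^sup>2 > 0" using e by simp
  from has_bochner_integral_mult_right[OF has_bochner_integral_inverse_sqrt_Icc[OF this], of "B_short / \<rho>"]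
  show ?thesis
    using False e by (simp add: short_time_majorant_def[abs_def] mult.commute)
qed

lemma green_majorant_integral:
  assumes m: "m > 0" and e: "\<epsilon> > 0" and \<rho>: "\<rho> \<ge> 0"
  shows "integrable lborel (green_majorant m \<epsilon> \<rho>)"
    and "integral\<^sup>L lborel (green_majorant m \<epsilon> \<rho>)
      \<le> 4 * pi\<^sup>2 + 2 * B_short + 2 * K_log * log_plus (1 / max \<rho> \<epsilon>) + K_log / m\<^sup>2 + K_exp / (2 * \<eta>)"
proof -
  let ?short = "short_time_majorant \<epsilon> \<rho>"
  let ?mid = "\<lambda>t. K_log * (indicator {(max \<rho> \<epsilon>)\<^sup>2..1} t / t)"
  let ?tail = "\<lambda>t. K_log * (exp (- m\<^sup>2 * t) * indicator {1..} t)"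
  let ?exp = "\<lambda>t. K_exp / \<epsilon>\<^sup>2 * (exp (- (2 * \<eta> / \<epsilon>\<^sup>2) * t) * indicator {0..} t)"
  have r: "max \<rho> \<epsilon> > 0" using e by simp
  have short: "integrable lborel ?short" "integral\<^sup>L lborel ?short \<le> 4 * pi\<^sup>2 + 2 * B_short"
    using has_bochner_integral_short_time_majorant[OF e \<rho>] B_short_pos
    by (auto simp: has_bochner_integral_iff)
  note log_part = integral_indicator_inverse_le_log_plus[OF r]
  have mid: "integrable lborel ?mid" "integral\<^sup>L lborel ?mid \<le> 2 * K_log * log_plus (1 / max \<rho> \<epsilon>)"
    using integrable_mult_right[OF log_part(1), of K_log]
      mult_left_mono[OF log_part(2), of K_log] K_log_pos
    by (simp_all only: integral_mult_right_zero) (simp add: mult_ac)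
  have "has_bochner_integral lborel ?tail (K_log * (exp (- m\<^sup>2 * 1) / m\<^sup>2))"
    using m by (intro has_bochner_integral_mult_right has_bochner_integral_exp_atLeast) simp
  moreover have "K_log * (exp (- m\<^sup>2 * 1) / m\<^sup>2) \<le> K_log / m\<^sup>2"
    using K_log_pos m by (simp add: divide_right_mono mult_left_le)
  ultimately have tail: "integrable lborel ?tail" "integral\<^sup>L lborel ?tail \<le> K_log / m\<^sup>2"
    by (auto simp: has_bochner_integral_iff)
  have "has_bochner_integral lborel ?exp (K_exp / \<epsilon>\<^sup>2 * (exp (- (2 * \<eta> / \<epsilon>\<^sup>2) * 0) / (2 * \<eta> / \<epsilon>\<^sup>2)))"
    using e \<eta>_pos by (intro has_bochner_integral_mult_right has_bochner_integral_exp_atLeast) simp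
  moreover have "K_exp / \<epsilon>\<^sup>2 * (exp (- (2 * \<eta> / \<epsilon>\<^sup>2) * 0) / (2 * \<eta> / \<epsilon>\<^sup>2)) = K_exp / (2 * \<eta>)"
    using e \<eta>_pos by simp
  ultimately have exp: "integrable lborel ?exp" "integral\<^sup>L lborel ?exp = K_exp / (2 * \<eta>)"
    by (auto simp: has_bochner_integral_iff)
  have eq: "green_majorant m \<epsilon> \<rho> = (\<lambda>t. ?short t + ?mid t + ?tail t + ?exp t)"
    by (simp add: green_majorant_def[abs_def])
  show "integrable lborel (green_majorant m \<epsilon> \<rho>)"
    unfolding eq using short mid tail exp by simp
  have "integral\<^sup>L lborel (green_majorant m \<epsilon> \<rho>)
      = integral\<^sup>L lborel ?short + integral\<^sup>L lborel ?mid + integral\<^sup>L lborel ?tail + integral\<^sup>L lborel ?exp"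
    unfolding eq using short mid tail exp by (simp add: Bochner_Integration.integral_add)
  then show "integral\<^sup>L lborel (green_majorant m \<epsilon> \<rho>)
      \<le> 4 * pi\<^sup>2 + 2 * B_short + 2 * K_log * log_plus (1 / max \<rho> \<epsilon>) + K_log / m\<^sup>2 + K_exp / (2 * \<eta>)"
    using short mid tail exp by linarith
qed

definition green_offset :: "real \<Rightarrow> real" where
  "green_offset m = (4 * pi\<^sup>2 + 2 * B_short + K_log / m\<^sup>2 + K_exp / (2 * \<eta>)) / (16 * pi ^ 3)"

lemma green_offset_pos: "m > 0 \<Longrightarrow> green_offset m > 0"
  using B_short_pos K_log_pos K_exp_pos \<eta>_pos
  by (simp add: green_offset_def add_pos_nonneg)

lemma norm_Green_le:
  assumes m: "m > 0" and e: "\<epsilon> > 0" and z: "z \<in> lattice \<epsilon>"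
  shows "cmod (Green m \<epsilon> x z)
    \<le> K_log / (8 * pi ^ 3) * log_plus (1 / max (sqrt ((norm x)\<^sup>2 + (norm z)\<^sup>2)) \<epsilon>) + green_offset m"
proof -
  define \<rho> where "\<rho> = sqrt ((norm x)\<^sup>2 + (norm z)\<^sup>2)"
  have \<rho>: "\<rho> \<ge> 0" by (simp add: \<rho>_def)
  have "cmod (Green m \<epsilon> x z) \<le> 1 / (16 * pi ^ 3) * integral\<^sup>L lborel (green_time_density m \<epsilon> x z)"
    by (rule norm_Green_le_time_integral(2)[OF m e])
  also have "\<dots> \<le> 1 / (16 * pi ^ 3) * integral\<^sup>L lborel (green_majorant m \<epsilon> \<rho>)"
    using norm_Green_le_time_integral(1)[OF m e] green_majorant_integral(1)[OF m e \<rho>]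
      green_time_density_le_majorant[OF e z] unfolding \<rho>_def by (intro mult_left_mono integral_mono) auto
  also have "\<dots> \<le> 1 / (16 * pi ^ 3) *
      (4 * pi\<^sup>2 + 2 * B_short + 2 * K_log * log_plus (1 / max \<rho> \<epsilon>) + K_log / m\<^sup>2 + K_exp / (2 * \<eta>))"
    by (intro mult_left_mono green_majorant_integral(2)[OF m e \<rho>]) simp
  also have "\<dots> = K_log / (8 * pi ^ 3) * log_plus (1 / max \<rho> \<epsilon>) + green_offset m"
    by (simp add: green_offset_def field_simps)
  finally show ?thesis unfolding \<rho>_def .
qed

end

lemma exists_green_parameters:
  fixes R :: real
  assumes R: "R > 1"
  obtains \<theta> \<delta> where "0 < \<theta>" "\<theta> \<le> 1" "0 < \<delta>" "(1 + \<delta>) / (1 - \<theta>\<^sup>2 / 24)\<^sup>2 \<le> R"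
proof
  define \<theta> where "\<theta> = sqrt ((R - 1) / R)"
  have \<theta>2: "\<theta>\<^sup>2 = (R - 1) / R" using R by (simp add: \<theta>_def)
  show "0 < \<theta>" "\<theta> \<le> 1" "0 < (R - 1) / 2" using R by (auto simp: \<theta>_def)
  have "(1 - \<theta>\<^sup>2 / 24)\<^sup>2 = 1 - \<theta>\<^sup>2 / 12 + (\<theta>\<^sup>2 / 24)\<^sup>2"
    by (simp add: power2_eq_square field_simps)
  then have \<gamma>: "1 - \<theta>\<^sup>2 / 12 \<le> (1 - \<theta>\<^sup>2 / 24)\<^sup>2"
    by simp
  have "1 + (R - 1) / 2 \<le> R * (1 - \<theta>\<^sup>2 / 12)"
    using R unfolding \<theta>2 by (simp add: field_simps)
  also have "\<dots> \<le> R * (1 - \<theta>\<^sup>2 / 24)\<^sup>2"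
    using R \<gamma> by (intro mult_left_mono) auto
  finally have "1 + (R - 1) / 2 \<le> R * (1 - \<theta>\<^sup>2 / 24)\<^sup>2" .
  moreover have "1 - \<theta>\<^sup>2 / 24 > 0"
    using R unfolding \<theta>2 by (simp add: field_simps)
  ultimately show "(1 + (R - 1) / 2) / (1 - \<theta>\<^sup>2 / 24)\<^sup>2 \<le> R"
    by (simp add: divide_le_eq mult.commute)
qed

theorem mainTheorem13:
  fixes m C :: real
  assumes "m > 0" and "C > 2 / (4 * pi)\<^sup>2"
  shows "\<exists>D > 0. \<forall>\<epsilon> x z. 0 < \<epsilon> \<and> \<epsilon> \<le> 1 \<and> z \<in> lattice \<epsilon> \<longrightarrow>
           cmod (Green m \<epsilon> x z)
             \<le> C * log_plus (1 / max (sqrt ((norm x)\<^sup>2 + (norm z)\<^sup>2)) \<epsilon>) + D"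
proof -
  have "8 * pi\<^sup>2 * C > 1"
    using assms(2) by (simp add: power2_eq_square field_simps)
  then obtain \<theta> \<delta> where params: "0 < \<theta>" "\<theta> \<le> 1" "0 < \<delta>"
    and coefficient: "(1 + \<delta>) / (1 - \<theta>\<^sup>2 / 24)\<^sup>2 \<le> 8 * pi\<^sup>2 * C"
    by (rule exists_green_parameters)
  interpret green_parameters \<theta> \<delta>
    using params by unfold_locales
  have "K_log / (8 * pi ^ 3) = ((1 + \<delta>) / \<gamma>) / (8 * pi\<^sup>2)"
    using \<gamma>_pos by (simp add: K_log_def power2_eq_square power3_eq_cube field_simps)
  also have "\<dots> \<le> (8 * pi\<^sup>2 * C) / (8 * pi\<^sup>2)"
    using coefficient unfolding \<gamma>_def by (intro divide_right_mono) auto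
  finally have log_coefficient: "K_log / (8 * pi ^ 3) \<le> C" by simp
  show ?thesis
  proof (intro exI[of _ "green_offset m"] conjI allI impI green_offset_pos[OF assms(1)])
    fix \<epsilon> :: real and x z :: "real \<times> real"
    assume "0 < \<epsilon> \<and> \<epsilon> \<le> 1 \<and> z \<in> lattice \<epsilon>"
    then have "cmod (Green m \<epsilon> x z)
        \<le> K_log / (8 * pi ^ 3) * log_plus (1 / max (sqrt ((norm x)\<^sup>2 + (norm z)\<^sup>2)) \<epsilon>) + green_offset m"
      using norm_Green_le[OF assms(1)] by blast
    also have "\<dots> \<le> C * log_plus (1 / max (sqrt ((norm x)\<^sup>2 + (norm z)\<^sup>2)) \<epsilon>) + green_offset m"
      by (intro add_right_mono mult_right_mono log_coefficient) (simp add: log_plus_def)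
    finally show "cmod (Green m \<epsilon> x z)
        \<le> C * log_plus (1 / max (sqrt ((norm x)\<^sup>2 + (norm z)\<^sup>2)) \<epsilon>) + green_offset m" .
  qed
qed

end
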